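(* Let $0<\varepsilon\le1$, $\alpha\in(0,1)$, $\xi(x)=e^{-\alpha x^2/(2\sqrt\varepsilon)}$ and $f_{2m}=x^{2m}\xi$ for $m\in\{0,1,2,\dots\}$. Then $$S_\varepsilon f_{2m}=-\frac{i}{2\sqrt\varepsilon}\,\Lambda_m(x,\alpha)\,\xi(x),$$ and consequently, for all $n,m\ge0$, $$(f_{2n},S_\varepsilon f_{2m})=-\frac{i}{2\sqrt\varepsilon}\int_{\mathbb R}\xi(x)\,x^{2n}\Lambda_m(x,\alpha)\,\xi(x)\,dx.$$
   Context: Work in $L^2(\mathbb{R})$ with $(f,g)=\int\overline fg\,dx$. Let $q$ be multiplication by $x$, $p=-i\,d/dx$, $t=q^{-1}p$ with $D(t)=\{f\in D(p):pf\in D(q^{-1})\}$, $L^2_0$ the even subspace. Define $S_\varepsilon$ in $L^2_0$ by $D(S_\varepsilon)=\{f\in L^2_0\cap\bigcap_nD(t^{2n+1}):\sum_{n=0}^N\frac{(-1)^n}{2n+1}(\sqrt\varepsilon t)^{2n+1}f$ converges in norm$\}$, $S_\varepsilon f=-\varepsilon^{-1/2}\sum_{n\ge0}\frac{(-1)^n}{2n+1}(\sqrt\varepsilon t)^{2n+1}f$. For $k\ge0$, $\Lambda_k(x,\alpha)=\big(x^2-2\sqrt\varepsilon\frac{\partial}{\partial\alpha}\big)^k\log\frac{1+\alpha}{1-\alpha}$, the operator $x^2-2\sqrt\varepsilon\,\partial_\alpha$ acting in the variable $\alpha$ with $x$ treated as a parameter. *)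

theory Defs
  imports "HOL-Analysis.Analysis"
begin

text \<open>Elements of L2(R) are represented by (Lebesgue measurable) functions real => complex;
  all identities between L2 elements are up to equality almost everywhere.
  Unbounded operators are represented by their graphs (relations).\<close>

definition L2 :: "(real \<Rightarrow> complex) \<Rightarrow> bool" where
  "L2 f \<longleftrightarrow> f \<in> borel_measurable lebesgue \<and>
            integrable lebesgue (\<lambda>x. (cmod (f x))\<^sup>2)"

definition L2_even :: "(real \<Rightarrow> complex) \<Rightarrow> bool" where
  "L2_even f \<longleftrightarrow> L2 f \<and> (AE x in lebesgue. f (- x) = f x)"

definition test_fun :: "(real \<Rightarrow> real) \<Rightarrow> bool" where
  "test_fun \<phi> \<longleftrightarrow> (\<forall>k x. ((deriv ^^ k) \<phi>) differentiable (at x)) \<and>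
                   (\<exists>R. \<forall>x. R < \<bar>x\<bar> \<longrightarrow> \<phi> x = 0)"

definition weak_deriv :: "(real \<Rightarrow> complex) \<Rightarrow> (real \<Rightarrow> complex) \<Rightarrow> bool" where
  "weak_deriv f g \<longleftrightarrow> (\<forall>\<phi>. test_fun \<phi> \<longrightarrow>
      integral\<^sup>L lebesgue (\<lambda>x. f x * of_real (deriv \<phi> x))
        = - integral\<^sup>L lebesgue (\<lambda>x. g x * of_real (\<phi> x)))"

text \<open>Graph of p = -i d/dx on its maximal domain D(p) = H^1: p_rel f h means f in D(p), p f = h.\<close>
definition p_rel :: "(real \<Rightarrow> complex) \<Rightarrow> (real \<Rightarrow> complex) \<Rightarrow> bool" where
  "p_rel f h \<longleftrightarrow> L2 f \<and> L2 h \<and> weak_deriv f (\<lambda>x. \<i> * h x)"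

text \<open>Graph of t = q^{-1} p, D(t) = {f in D(p). p f in D(q^{-1})}: t f = h means h = (p f)/x a.e.\<close>
definition t_rel :: "(real \<Rightarrow> complex) \<Rightarrow> (real \<Rightarrow> complex) \<Rightarrow> bool" where
  "t_rel f h \<longleftrightarrow> (\<exists>g. p_rel f g \<and> L2 h \<and> (AE x in lebesgue. g x = of_real x * h x))"

fun t_pow :: "nat \<Rightarrow> (real \<Rightarrow> complex) \<Rightarrow> (real \<Rightarrow> complex) \<Rightarrow> bool" where
  "t_pow 0 f h \<longleftrightarrow> L2 f \<and> (AE x in lebesgue. h x = f x)"
| "t_pow (Suc k) f h \<longleftrightarrow> (\<exists>g. t_rel f g \<and> t_pow k g h)"

text \<open>Graph of S_eps: S_rel eps f h means f in D(S_eps) and S_eps f = h. The norm-convergence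
  of the partial sums sum_{n<=N} (-1)^n/(2n+1) (sqrt eps t)^(2n+1) f to the limit -sqrt eps * h
  is expressed by the L2 distance tending to 0.\<close>
definition S_rel :: "real \<Rightarrow> (real \<Rightarrow> complex) \<Rightarrow> (real \<Rightarrow> complex) \<Rightarrow> bool" where
  "S_rel \<epsilon> f h \<longleftrightarrow> L2_even f \<and> L2 h \<and>
     (\<exists>T :: nat \<Rightarrow> real \<Rightarrow> complex.
        (\<forall>n. t_pow (2 * n + 1) f (T n)) \<and>
        ((\<lambda>N. integral\<^sup>L lebesgue (\<lambda>x. (cmod ((\<Sum>n\<le>N. of_real ((-1) ^ n / real (2 * n + 1)
                 * sqrt \<epsilon> ^ (2 * n + 1)) * T n x) - of_real (- sqrt \<epsilon>) * h x))\<^sup>2))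
          \<longlonglongrightarrow> 0))"

primrec Lambda :: "real \<Rightarrow> nat \<Rightarrow> real \<Rightarrow> real \<Rightarrow> real" where
  "Lambda \<epsilon> 0 x = (\<lambda>a. ln ((1 + a) / (1 - a)))"
| "Lambda \<epsilon> (Suc k) x = (\<lambda>a. x\<^sup>2 * Lambda \<epsilon> k x a - 2 * sqrt \<epsilon> * deriv (Lambda \<epsilon> k x) a)"

end

theory Submission
  imports Defs "HOL-Computational_Algebra.Polynomial" "HOL-Probability.Distributions"
begin

text \<open>
  Put \<open>\<kappa> = \<alpha> / sqrt \<epsilon>\<close>, so that \<open>\<xi> x = exp (- \<kappa> x\<^sup>2 / 2)\<close>. The operator
  \<open>t = q\<^sup>-\<^sup>1 p\<close>, essentially \<open>f \<mapsto> f' / x\<close>, maps the finite-dimensional space of the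
  functions \<open>P(x\<^sup>2) \<xi>\<close> with \<open>deg P \<le> m\<close> into itself, and the coefficients of
  \<open>t\<^sup>k f\<^sub>2\<^sub>m\<close> can be computed in closed form. In the series defining \<open>S\<^sub>\<epsilon> f\<^sub>2\<^sub>m\<close>, the
  coefficient of \<open>x\<^bsup>2(m-j)\<^esup> \<xi>\<close> then becomes a fixed multiple of
  \<open>\<Sum>\<^sub>n j! C(2n+1, j) \<alpha>\<^bsup>2n+1-j\<^esup> / (2n+1)\<close>, the \<open>j\<close>-th derivative of
  \<open>log ((1 + \<alpha>) / (1 - \<alpha>)) = \<Sum>\<^sub>n 2 \<alpha>\<^bsup>2n+1\<^esup> / (2n+1)\<close>, which converges because
  \<open>\<alpha> < 1\<close>. By the binomial theorem for the commuting operators \<open>x\<^sup>2\<close> and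
  \<open>-2 sqrt \<epsilon> \<partial>\<^sub>\<alpha>\<close> these sums assemble to \<open>\<Lambda>\<^sub>m(x, \<alpha>)\<close>; and in a space of
  Gaussian-weighted polynomials of bounded degree, convergence of the coefficients implies
  convergence in \<open>L\<^sup>2\<close>.

  The inner-product formula needs \<open>S\<^sub>\<epsilon> f\<^sub>2\<^sub>m\<close> to be determined by \<open>f\<^sub>2\<^sub>m\<close>: weak
  derivatives are unique by the fundamental lemma of the calculus of variations, hence so are
  the powers of \<open>t\<close>, and \<open>L\<^sup>2\<close> limits are unique.
\<close>

section \<open>Smooth functions and test functions\<close>

definition smooth :: "(real \<Rightarrow> real) \<Rightarrow> bool" where
  "smooth f \<longleftrightarrow> (\<forall>k x. ((deriv ^^ k) f) differentiable (at x))"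

lemma smooth_if_deriv_closed:
  assumes "f \<in> A" "\<And>g. g \<in> A \<Longrightarrow> (\<forall>x. g differentiable (at x)) \<and> deriv g \<in> A"
  shows "smooth f"
proof -
  have "(deriv ^^ k) f \<in> A" for k
    by (induction k) (use assms in auto)
  then show ?thesis unfolding smooth_def using assms(2) by blast
qed

lemma smooth_differentiable: "smooth f \<Longrightarrow> f differentiable (at x)"
  unfolding smooth_def by (metis funpow_0)

lemma smooth_has_real_derivative: "smooth f \<Longrightarrow> (f has_real_derivative deriv f x) (at x)"
  using smooth_differentiable DERIV_deriv_iff_real_differentiable by blast

lemma smooth_deriv: "smooth f \<Longrightarrow> smooth (deriv f)"
  unfolding smooth_def by (metis funpow_Suc_right o_apply)

lemma deriv_eqI:
  assumes "\<And>x. (f has_real_derivative g x) (at x)"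
  shows "deriv f = g"
  using assms DERIV_imp_deriv by blast

lemma smooth_const: "smooth (\<lambda>_. c)"
proof (rule smooth_if_deriv_closed[where A="{\<lambda>_. c | c. True}"])
  fix h assume "h \<in> {\<lambda>_::real. c | c::real. True}"
  then obtain c where h: "h = (\<lambda>_. c)" by blast
  have "deriv h = (\<lambda>_. 0)" unfolding h by (rule deriv_eqI) auto
  then show "(\<forall>x. h differentiable (at x)) \<and> deriv h \<in> {\<lambda>_. c | c. True}"
    unfolding h by auto
qed auto

lemma smooth_add:
  assumes "smooth f" "smooth g" shows "smooth (\<lambda>x. f x + g x)"
proof (rule smooth_if_deriv_closed[where A="{\<lambda>x. f x + g x | f g. smooth f \<and> smooth g}"])
  fix h assume "h \<in> {\<lambda>x. f x + g x | f g. smooth f \<and> smooth g}"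
  then obtain f g where h: "h = (\<lambda>x. f x + g x)" "smooth f" "smooth g" by blast
  have d: "(h has_real_derivative deriv f x + deriv g x) (at x)" for x
    unfolding h by (intro derivative_intros smooth_has_real_derivative h)
  show "(\<forall>x. h differentiable (at x)) \<and> deriv h \<in> {\<lambda>x. f x + g x | f g. smooth f \<and> smooth g}"
    using d deriv_eqI[OF d] smooth_deriv h real_differentiable_def by blast
qed (use assms in blast)

lemma smooth_affine_comp:
  assumes "smooth f" shows "smooth (\<lambda>x. r * f (s * x + c))"
proof (rule smooth_if_deriv_closed[where A="{\<lambda>x. r * f (s * x + c) | r f. smooth f}"])
  fix h assume "h \<in> {\<lambda>x. r * f (s * x + c) | r f. smooth f}"
  then obtain r f where h: "h = (\<lambda>x. r * f (s * x + c))" "smooth f" by blast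
  have d: "(h has_real_derivative (r * s) * deriv f (s * x + c)) (at x)" for x
  proof -
    have "((\<lambda>x. f (s * x + c)) has_real_derivative deriv f (s * x + c) * s) (at x)"
      by (rule DERIV_chain2[OF smooth_has_real_derivative[OF h(2)]]) (auto intro!: derivative_eq_intros)
    from DERIV_cmult[OF this, of r] show ?thesis unfolding h by (simp add: mult_ac)
  qed
  show "(\<forall>x. h differentiable (at x)) \<and> deriv h \<in> {\<lambda>x. r * f (s * x + c) | r f. smooth f}"
    using d deriv_eqI[OF d] smooth_deriv h real_differentiable_def by blast
qed (use assms in blast)

text \<open>Finite sums of products of smooth functions form a class that is closed under \<open>deriv\<close>.\<close>

definition sum_prods :: "((real \<Rightarrow> real) \<times> (real \<Rightarrow> real)) list \<Rightarrow> real \<Rightarrow> real" where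
  "sum_prods L x = sum_list (map (\<lambda>(f,g). f x * g x) L)"

definition deriv_prods :: "((real \<Rightarrow> real) \<times> (real \<Rightarrow> real)) list \<Rightarrow> ((real \<Rightarrow> real) \<times> (real \<Rightarrow> real)) list" where
  "deriv_prods L = concat (map (\<lambda>(f,g). [(deriv f, g), (f, deriv g)]) L)"

lemma sum_prods_has_derivative:
  assumes "\<forall>(f,g)\<in>set L. smooth f \<and> smooth g"
  shows "(sum_prods L has_real_derivative sum_prods (deriv_prods L) x) (at x)"
  using assms
proof (induction L)
  case Nil
  then show ?case by (simp add: sum_prods_def deriv_prods_def)
next
  case (Cons p L)
  obtain f g where p: "p = (f,g)" by fastforce
  have sf: "smooth f" "smooth g" using Cons.prems p by auto
  have e1: "sum_prods (p # L) = (\<lambda>x. f x * g x + sum_prods L x)" by (auto simp: sum_prods_def p)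
  have e2: "sum_prods (deriv_prods (p # L)) x = deriv f x * g x + f x * deriv g x + sum_prods (deriv_prods L) x"
    by (simp add: sum_prods_def deriv_prods_def p)
  have ih: "(sum_prods L has_real_derivative sum_prods (deriv_prods L) x) (at x)" using Cons.IH Cons.prems by auto
  show ?case unfolding e1 e2
    using DERIV_add[OF DERIV_mult[OF smooth_has_real_derivative[OF sf(1)] smooth_has_real_derivative[OF sf(2)]] ih]
    by (simp add: mult_ac)
qed

lemma deriv_prods_smooth:
  assumes "\<forall>(f,g)\<in>set L. smooth f \<and> smooth g"
  shows "\<forall>(f,g)\<in>set (deriv_prods L). smooth f \<and> smooth g"
  using assms by (auto simp: deriv_prods_def smooth_deriv)

lemma smooth_mult:
  assumes "smooth f" "smooth g" shows "smooth (\<lambda>x. f x * g x)"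
proof (rule smooth_if_deriv_closed[where A="{sum_prods L | L. \<forall>(f,g)\<in>set L. smooth f \<and> smooth g}"])
  show "(\<lambda>x. f x * g x) \<in> {sum_prods L | L. \<forall>(f,g)\<in>set L. smooth f \<and> smooth g}"
    using assms by (intro CollectI exI[of _ "[(f,g)]"]) (auto simp: sum_prods_def fun_eq_iff)
next
  fix h assume "h \<in> {sum_prods L | L. \<forall>(f,g)\<in>set L. smooth f \<and> smooth g}"
  then obtain L where h: "h = sum_prods L" "\<forall>(f,g)\<in>set L. smooth f \<and> smooth g" by blast
  have d: "(h has_real_derivative sum_prods (deriv_prods L) x) (at x)" for x
    unfolding h(1) by (rule sum_prods_has_derivative[OF h(2)])
  show "(\<forall>x. h differentiable (at x)) \<and> deriv h \<in> {sum_prods L | L. \<forall>(f,g)\<in>set L. smooth f \<and> smooth g}"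
    using d deriv_eqI[OF d] deriv_prods_smooth[OF h(2)] real_differentiable_def by blast
qed

lemma smooth_power: "smooth f \<Longrightarrow> smooth (\<lambda>x. f x ^ n)"
  by (induction n) (auto intro: smooth_mult smooth_const)

lemma smooth_diff: "smooth f \<Longrightarrow> smooth g \<Longrightarrow> smooth (\<lambda>x. f x - g x)"
  using smooth_add[of f "\<lambda>x. (-1) * g (1 * x + 0)"] smooth_affine_comp[of g "-1" 1 0] by simp

lemma test_fun_iff: "test_fun \<phi> \<longleftrightarrow> smooth \<phi> \<and> (\<exists>R. \<forall>x. R < \<bar>x\<bar> \<longrightarrow> \<phi> x = 0)"
  by (simp add: test_fun_def smooth_def)

definition flat_poly :: "real poly \<Rightarrow> real \<Rightarrow> real" where
  "flat_poly p x = (if 0 < x then poly p (1/x) * exp (-1/x) else 0)"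

definition flat_poly_deriv :: "real poly \<Rightarrow> real poly" where
  "flat_poly_deriv p = [:0,0,1:] * (p - pderiv p)"

lemma poly_div_exp_tendsto_0: "((\<lambda>z. poly p z / exp z) \<longlongrightarrow> (0::real)) at_top"
proof -
  have "((\<lambda>z. \<Sum>i\<le>degree p. coeff p i * (z ^ i / exp z)) \<longlongrightarrow> (\<Sum>i\<le>degree p. coeff p i * 0)) at_top"
    by (intro tendsto_sum tendsto_mult tendsto_const tendsto_power_div_exp_0)
  then show ?thesis
    by (simp add: poly_altdef sum_divide_distrib)
qed

lemma flat_poly_has_derivative_0: "(flat_poly p has_real_derivative 0) (at 0)"
proof -
  have "((\<lambda>y. (flat_poly p y - flat_poly p 0) / (y - 0)) \<longlongrightarrow> 0) (at_left 0)"
  proof (rule Lim_transform_eventually[OF tendsto_const])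
    show "\<forall>\<^sub>F y in at_left 0. 0 = (flat_poly p y - flat_poly p 0) / (y - 0)"
      using eventually_at_left_real[of "-1" "0::real"] by (auto elim!: eventually_mono simp: flat_poly_def)
  qed
  moreover have "((\<lambda>y. (flat_poly p y - flat_poly p 0) / (y - 0)) \<longlongrightarrow> 0) (at_right 0)"
  proof -
    have "((\<lambda>y. poly (pCons 0 p) (inverse y) / exp (inverse y)) \<longlongrightarrow> 0) (at_right 0)"
      by (rule filterlim_compose[OF poly_div_exp_tendsto_0 filterlim_inverse_at_top_right])
    then show ?thesis
    proof (rule Lim_transform_eventually)
      show "\<forall>\<^sub>F y in at_right 0. poly (pCons 0 p) (inverse y) / exp (inverse y) = (flat_poly p y - flat_poly p 0) / (y - 0)"
        using eventually_at_right_real[of "0::real" 1]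
        by (auto elim!: eventually_mono simp: flat_poly_def exp_minus field_simps)
    qed
  qed
  ultimately have "((\<lambda>y. (flat_poly p y - flat_poly p 0) / (y - 0)) \<longlongrightarrow> 0) (at 0)"
    by (rule filterlim_split_at)
  then show ?thesis unfolding has_field_derivative_iff by (simp add: flat_poly_def)
qed

lemma flat_poly_has_derivative: "(flat_poly p has_real_derivative flat_poly (flat_poly_deriv p) x) (at x)"
proof (cases x "0::real" rule: linorder_cases)
  case less
  have "(flat_poly p has_real_derivative 0) (at x)"
    by (rule has_field_derivative_transform_within_open[OF DERIV_const, where S="{..<0}"])
      (use less in \<open>auto simp: flat_poly_def\<close>)
  then show ?thesis using less by (simp add: flat_poly_def)
next
  case equal
  then show ?thesis using flat_poly_has_derivative_0 by (simp add: flat_poly_def)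
next
  case greater
  let ?H = "\<lambda>x. poly p (1/x) * exp (-1/x)"
  have "(?H has_real_derivative
          poly (pderiv p) (1/x) * (- 1 / x^2) * exp (-1/x) + poly p (1/x) * (exp (-1/x) * (1/x^2))) (at x)"
    using greater by (auto intro!: derivative_eq_intros DERIV_chain2[OF poly_DERIV] simp: power2_eq_square)
  moreover have "poly (pderiv p) (1/x) * (- 1 / x^2) * exp (-1/x) + poly p (1/x) * (exp (-1/x) * (1/x^2))
      = flat_poly (flat_poly_deriv p) x"
    using greater by (simp add: flat_poly_def flat_poly_deriv_def algebra_simps power2_eq_square divide_simps)
  ultimately have "(?H has_real_derivative flat_poly (flat_poly_deriv p) x) (at x)" by simp
  then show ?thesis
    by (rule has_field_derivative_transform_within_open[where S="{0<..}"])
      (use greater in \<open>auto simp: flat_poly_def\<close>)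
qed

lemma smooth_flat_poly: "smooth (flat_poly p)"
proof (rule smooth_if_deriv_closed[where A="range flat_poly"])
  fix g assume "g \<in> range flat_poly"
  then obtain p where g: "g = flat_poly p" by blast
  have "deriv g = flat_poly (flat_poly_deriv p)" unfolding g by (rule deriv_eqI[OF flat_poly_has_derivative])
  then show "(\<forall>x. g differentiable (at x)) \<and> deriv g \<in> range flat_poly"
    using flat_poly_has_derivative g real_differentiable_def by blast
qed auto

definition flat_step :: "real \<Rightarrow> real" where
  "flat_step x = (if 0 < x then exp (-1/x) else 0)"

lemma flat_step_eq_flat_poly: "flat_step = flat_poly 1"
  by (auto simp: flat_step_def flat_poly_def fun_eq_iff)

lemma smooth_flat_step: "smooth flat_step"
  by (simp add: smooth_flat_poly flat_step_eq_flat_poly)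

lemma flat_step_nonneg: "0 \<le> flat_step x" and flat_step_le_1: "flat_step x \<le> 1" and flat_step_pos: "0 < x \<Longrightarrow> 0 < flat_step x"
  and flat_step_eq_0: "x \<le> 0 \<Longrightarrow> flat_step x = 0"
  by (auto simp: flat_step_def)

definition bump :: "real \<Rightarrow> real \<Rightarrow> real \<Rightarrow> real" where
  "bump a b x = flat_step (x - a) * flat_step (b - x)"

definition bump_approx :: "real \<Rightarrow> real \<Rightarrow> nat \<Rightarrow> real \<Rightarrow> real" where
  "bump_approx a b n x = 1 - (1 - bump a b x) ^ n"

lemma smooth_bump: "smooth (bump a b)"
  using smooth_mult[OF smooth_affine_comp[OF smooth_flat_step, of 1 1 "-a"]
      smooth_affine_comp[OF smooth_flat_step, of 1 "-1" b]]
  by (simp add: bump_def[abs_def])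

lemma smooth_bump_approx: "smooth (bump_approx a b n)"
  unfolding bump_approx_def[abs_def]
  by (intro smooth_diff smooth_const smooth_power smooth_bump)

lemma bump_range: "0 \<le> bump a b x" "bump a b x \<le> 1"
  unfolding bump_def using flat_step_nonneg flat_step_le_1
  by (auto intro: mult_nonneg_nonneg mult_le_one)

lemma bump_outside: "x \<le> a \<or> b \<le> x \<Longrightarrow> bump a b x = 0"
  unfolding bump_def by (auto simp: flat_step_eq_0)

lemma bump_inside: "a < x \<Longrightarrow> x < b \<Longrightarrow> 0 < bump a b x"
  unfolding bump_def by (auto intro!: mult_pos_pos flat_step_pos)

lemma bump_approx_range: "0 \<le> bump_approx a b n x" "bump_approx a b n x \<le> 1"
  unfolding bump_approx_def using bump_range[of a b x]
  by (auto intro!: power_le_one)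

lemma bump_approx_outside: "x \<le> a \<or> b \<le> x \<Longrightarrow> bump_approx a b n x = 0"
  unfolding bump_approx_def by (simp add: bump_outside)

lemma bump_approx_tendsto_indicator: "(\<lambda>n. bump_approx a b n x) \<longlonglongrightarrow> indicator {a<..<b} x"
proof (cases "a < x \<and> x < b")
  case True
  then have "norm (1 - bump a b x) < 1" using bump_inside[of a x b] bump_range[of a b x] by auto
  then have "(\<lambda>n. 1 - (1 - bump a b x) ^ n) \<longlonglongrightarrow> 1 - 0"
    by (intro tendsto_intros)
  then show ?thesis using True by (simp add: bump_approx_def indicator_def)
next
  case False
  then show ?thesis by (auto simp: bump_approx_outside indicator_def)
qed

lemma test_fun_bump_approx: "test_fun (bump_approx a b n)"
  unfolding test_fun_iff
  by (auto intro!: smooth_bump_approx exI[of _ "\<bar>a\<bar> + \<bar>b\<bar>"] bump_approx_outside)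

lemma test_fun_supportE:
  assumes "test_fun \<phi>"
  obtains c where "0 \<le> c" "\<And>x. x \<notin> {-c<..<c} \<Longrightarrow> \<phi> x = 0" "\<And>x. x \<notin> {-c<..<c} \<Longrightarrow> deriv \<phi> x = 0"
proof -
  obtain R where R: "\<And>x. R < \<bar>x\<bar> \<Longrightarrow> \<phi> x = 0" using assms by (auto simp: test_fun_iff)
  define c where "c = \<bar>R\<bar> + 1"
  define K where "K = {-(\<bar>R\<bar> + 1/2)..\<bar>R\<bar> + 1/2}"
  have outside: "\<phi> x = 0" if "x \<in> - K" for x
    using that by (intro R) (auto simp: K_def)
  have "deriv \<phi> x = 0" if x: "x \<notin> {-c<..<c}" for x
  proof -
    have "(\<phi> has_real_derivative 0) (at x)"
    proof (rule has_field_derivative_transform_within_open[OF DERIV_const])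
      show "open (- K)" "x \<in> - K" using x by (auto simp: K_def c_def)
    qed (use outside in auto)
    then show ?thesis by (rule DERIV_imp_deriv)
  qed
  moreover have "\<phi> x = 0" if "x \<notin> {-c<..<c}" for x
    using that by (intro outside) (auto simp: K_def c_def)
  moreover have "0 \<le> c" by (simp add: c_def)
  ultimately show ?thesis using that by blast
qed

section \<open>The fundamental lemma of the calculus of variations\<close>

lemma L2_meas: "L2 f \<Longrightarrow> f \<in> borel_measurable lebesgue" by (simp add: L2_def)
lemma L2_int: "L2 f \<Longrightarrow> integrable lebesgue (\<lambda>x. (cmod (f x))\<^sup>2)" by (simp add: L2_def)

lemma continuous_on_borel_measurable_lebesgue:
  fixes f :: "real \<Rightarrow> 'b::{banach, second_countable_topology}"
  assumes c: "continuous_on UNIV f" shows "f \<in> borel_measurable lebesgue"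
proof -
  have "f \<in> borel_measurable borel" by (rule borel_measurable_continuous_onI[OF c])
  then have "f \<in> borel_measurable lborel" by simp
  then show ?thesis by (rule measurable_completion)
qed

lemma lebesgue_measurable_ident[measurable]: "(\<lambda>x::real. x) \<in> borel_measurable lebesgue"
  by (rule continuous_on_borel_measurable_lebesgue) (rule continuous_on_id)

lemma lebesgue_sets_Ioo[measurable]: "{a<..<b::real} \<in> sets lebesgue"
  using sets_completionI_sets[of "{a<..<b}" lborel] by simp

lemma smooth_continuous_on: "smooth f \<Longrightarrow> continuous_on UNIV f"
  by (meson continuous_at_imp_continuous_on differentiable_imp_continuous_within smooth_differentiable)

lemma integrable_indicator_Ioo: "integrable lebesgue (indicator {a<..<b} :: real \<Rightarrow> real)"
  by (cases "a \<le> b") (auto simp: integrable_indicator_iff)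

lemma integral_compact_support:
  fixes g :: "real \<Rightarrow> 'a::euclidean_space"
  assumes gc: "continuous_on UNIV g" and z: "\<And>x. x \<notin> {a..b} \<Longrightarrow> g x = 0"
  shows "integrable lebesgue g" "integral\<^sup>L lebesgue g = integral {a..b} g"
proof -
  have eq: "(\<lambda>x. indicator {a..b} x *\<^sub>R g x) = g" using z by (auto simp: fun_eq_iff split: split_indicator)
  have "integrable lborel (\<lambda>x. indicator {a..b} x *\<^sub>R g x)"
    by (rule borel_integrable_compact) (auto intro: continuous_on_subset[OF gc])
  then have il: "integrable lborel g" unfolding eq .
  have gm: "g \<in> borel_measurable lborel" using borel_measurable_continuous_onI[OF gc] by simp
  show il2: "integrable lebesgue g" using il integrable_completion[OF gm] by simp
  have "integral\<^sup>L lebesgue g = integral UNIV g" by (rule integral_lebesgue[symmetric, OF il2])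
  also have "integral UNIV g = integral UNIV (\<lambda>x. if x \<in> {a..b} then g x else 0)"
    by (rule arg_cong[where f="integral UNIV"]) (use z in auto)
  also have "\<dots> = integral {a..b} g" by (rule integral_restrict_UNIV)
  finally show "integral\<^sup>L lebesgue g = integral {a..b} g" .
qed

lemma integral_eq_0_iff_nn_integrals_eq:
  fixes g :: "'a \<Rightarrow> real"
  assumes "integrable M g"
  shows "integral\<^sup>L M g = 0 \<longleftrightarrow> (\<integral>\<^sup>+x. ennreal (g x) \<partial>M) = (\<integral>\<^sup>+x. ennreal (- g x) \<partial>M)"
proof -
  have f1: "(\<integral>\<^sup>+x. ennreal (g x) \<partial>M) \<noteq> \<infinity>" "(\<integral>\<^sup>+x. ennreal (- g x) \<partial>M) \<noteq> \<infinity>"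
    using integrableD[OF assms] by auto
  have "enn2real A = enn2real B \<longleftrightarrow> A = B" if "A \<noteq> \<infinity>" "B \<noteq> \<infinity>" for A B :: ennreal
    using that by (cases A; cases B) auto
  from this[OF f1] show ?thesis
    unfolding real_lebesgue_integral_def[OF assms] by simp
qed

lemma AE_zero_if_integrals_greaterThan_zero:
  fixes w :: "real \<Rightarrow> real"
  assumes w: "integrable lborel w"
    and zero: "\<And>x. (\<integral>y. w y * indicator {x<..} y \<partial>lborel) = 0"
  shows "AE y in lborel. w y = 0"
proof -
  have w_ind: "integrable lborel (\<lambda>y. w y * indicator A y)" if "A \<in> sets borel" for A
    using integrable_mult_indicator[OF _ w, of A] that by (simp add: mult.commute)
  define M1 where "M1 = density lborel (\<lambda>y. ennreal (w y))"
  define M2 where "M2 = density lborel (\<lambda>y. ennreal (- w y))"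
  have w_meas: "w \<in> borel_measurable borel" using borel_measurable_integrable[OF w] by simp
  have M: "emeasure M1 A = (\<integral>\<^sup>+y. ennreal (w y * indicator A y) \<partial>lborel)"
          "emeasure M2 A = (\<integral>\<^sup>+y. ennreal (- (w y * indicator A y)) \<partial>lborel)"
    if "A \<in> sets borel" for A
    unfolding M1_def M2_def using that w_meas
    by (auto simp: emeasure_density intro!: nn_integral_cong split: split_indicator)
  \<comment> \<open>The positive and negative parts of w have the same integral over every half-line,
    so they define the same measure.\<close>
  have "M1 = M2"
  proof (rule measure_eqI_lessThan)
    show "sets M1 = sets borel" "sets M2 = sets borel" by (simp_all add: M1_def M2_def)
    fix x :: real
    show "emeasure M1 {x<..} < \<infinity>"
      using M(1)[of "{x<..}"] integrableD(2)[OF w_ind[of "{x<..}"]] by (simp add: top.not_eq_extremum)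
    show "emeasure M1 {x<..} = emeasure M2 {x<..}"
      using M[of "{x<..}"] zero[of x] integral_eq_0_iff_nn_integrals_eq[OF w_ind[of "{x<..}"]] by simp
  qed
  show ?thesis
  proof (rule density_unique_real[where f'="\<lambda>_. 0", OF w])
    fix A :: "real set" assume A: "A \<in> sets lborel"
    have "emeasure M1 A = emeasure M2 A" using \<open>M1 = M2\<close> by simp
    then have "(\<integral>y. w y * indicator A y \<partial>lborel) = 0"
      using M[of A] A integral_eq_0_iff_nn_integrals_eq[OF w_ind[of A]] by simp
    then show "(\<integral>x \<in> A. w x \<partial>lborel) = (\<integral>x \<in> A. 0 \<partial>lborel)"
      by (simp add: set_lebesgue_integral_def mult.commute)
  qed simp
qed

lemma AE_zero_if_Ioo_integrals_zero_borel:
  fixes v :: "real \<Rightarrow> real"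
  assumes v[measurable]: "v \<in> borel_measurable borel"
  assumes int: "\<And>a b. a < b \<Longrightarrow> integrable lborel (\<lambda>x. v x * indicator {a<..<b} x)"
  assumes zero: "\<And>a b. a < b \<Longrightarrow> (\<integral>x. v x * indicator {a<..<b} x \<partial>lborel) = 0"
  shows "AE x in lborel. v x = 0"
proof -
  have "AE x in lborel. x \<in> {- real n - 1<..<real n + 1} \<longrightarrow> v x = 0" for n :: nat
  proof -
    define w where "w = (\<lambda>x. v x * indicator {- real n - 1<..<real n + 1} x)"
    have "AE y in lborel. w y = 0"
    proof (rule AE_zero_if_integrals_greaterThan_zero)
      show "integrable lborel w" unfolding w_def by (rule int) simp
      fix x
      show "(\<integral>y. w y * indicator {x<..} y \<partial>lborel) = 0"
      proof (cases "max x (- real n - 1) < real n + 1")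
        case True
        have "(\<lambda>y. w y * indicator {x<..} y) = (\<lambda>y. v y * indicator {max x (- real n - 1)<..<real n + 1} y)"
          by (auto simp: w_def fun_eq_iff split: split_indicator)
        then show ?thesis using zero[OF True] by simp
      next
        case False
        then have "(\<lambda>y. w y * indicator {x<..} y) = (\<lambda>y. 0)"
          by (auto simp: w_def fun_eq_iff split: split_indicator)
        then show ?thesis by simp
      qed
    qed
    then show ?thesis by eventually_elim (auto simp: w_def)
  qed
  then have "AE x in lborel. \<forall>n::nat. x \<in> {- real n - 1<..<real n + 1} \<longrightarrow> v x = 0"
    by (rule AE_all_countable[THEN iffD2, OF allI])
  then show ?thesis
  proof eventually_elim
    case (elim x)
    have "x \<in> {- real (nat \<lceil>\<bar>x\<bar>\<rceil>) - 1<..<real (nat \<lceil>\<bar>x\<bar>\<rceil>) + 1}"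
      using real_nat_ceiling_ge[of "\<bar>x\<bar>"] by (simp only: greaterThanLessThan_iff) linarith
    then show ?case using elim by blast
  qed
qed

lemma AE_zero_if_Ioo_integrals_zero:
  fixes v :: "real \<Rightarrow> real"
  assumes v[measurable]: "v \<in> borel_measurable lebesgue"
  assumes int: "\<And>a b. a < b \<Longrightarrow> integrable lebesgue (\<lambda>x. v x * indicator {a<..<b} x)"
  assumes zero: "\<And>a b. a < b \<Longrightarrow> (\<integral>x. v x * indicator {a<..<b} x \<partial>lebesgue) = 0"
  shows "AE x in lebesgue. v x = 0"
proof -
  obtain v' where v': "v' \<in> borel_measurable lborel" "AE x in lborel. v x = v' x"
    using completion_ex_borel_measurable_real[OF v] by blast
  have v'b[measurable]: "v' \<in> borel_measurable borel" using v'(1) by simp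
  have v'L[measurable]: "v' \<in> borel_measurable lebesgue" using v'(1) by (rule measurable_completion)
  have ae: "AE x in lebesgue. v x * indicator {a<..<b} x = v' x * indicator {a<..<b} x" for a b :: real
    using AE_completion[OF v'(2)] by eventually_elim simp
  have "AE x in lborel. v' x = 0"
  proof (rule AE_zero_if_Ioo_integrals_zero_borel[OF v'b])
    fix a b :: real assume ab: "a < b"
    have i: "integrable lebesgue (\<lambda>x. v' x * indicator {a<..<b} x)"
    proof -
      have "integrable lebesgue (\<lambda>x. v x * indicator {a<..<b} x) \<longleftrightarrow> integrable lebesgue (\<lambda>x. v' x * indicator {a<..<b} x)"
      proof (rule integrable_cong_AE)
        show "(\<lambda>x. v x * indicator {a<..<b} x) \<in> borel_measurable lebesgue" by measurable
        show "(\<lambda>x. v' x * indicator {a<..<b} x) \<in> borel_measurable lebesgue" by measurable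
      qed (rule ae)
      then show ?thesis using int[OF ab] by simp
    qed
    show "integrable lborel (\<lambda>x. v' x * indicator {a<..<b} x)"
      using i integrable_completion[of "\<lambda>x. v' x * indicator {a<..<b} x" lborel] by simp
    have "(\<integral>x. v' x * indicator {a<..<b} x \<partial>lborel) = (\<integral>x. v' x * indicator {a<..<b} x \<partial>lebesgue)"
      by (rule integral_completion[symmetric]) simp
    also have "\<dots> = (\<integral>x. v x * indicator {a<..<b} x \<partial>lebesgue)"
      proof (rule integral_cong_AE)
        show "(\<lambda>x. v x * indicator {a<..<b} x) \<in> borel_measurable lebesgue" by measurable
        show "(\<lambda>x. v' x * indicator {a<..<b} x) \<in> borel_measurable lebesgue" by measurable
        show "AE x in lebesgue. v' x * indicator {a<..<b} x = v x * indicator {a<..<b} x"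
          using ae[of a b] by eventually_elim auto
      qed
    finally show "(\<integral>x. v' x * indicator {a<..<b} x \<partial>lborel) = 0" using zero[OF ab] by simp
  qed
  with v'(2) have "AE x in lborel. v x = 0" by eventually_elim simp
  then show ?thesis by (rule AE_completion)
qed

lemma integral_bump_approx_tendsto:
  assumes "L2 u"
  shows "integrable lebesgue (\<lambda>x. u x * of_real (indicator {a<..<b} x))"
    and "(\<lambda>n. \<integral>x. u x * of_real (bump_approx a b n x) \<partial>lebesgue)
           \<longlonglongrightarrow> (\<integral>x. u x * of_real (indicator {a<..<b} x) \<partial>lebesgue)"
proof -
  have [measurable]: "u \<in> borel_measurable lebesgue" using assms by (rule L2_meas)
  have [measurable]: "bump_approx a b n \<in> borel_measurable lebesgue" for n
    by (rule continuous_on_borel_measurable_lebesgue[OF smooth_continuous_on[OF smooth_bump_approx]])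
  \<comment> \<open>A dominating function, since |u| \<le> |u|^2 + 1.\<close>
  define w where "w x = (cmod (u x))\<^sup>2 + indicator {a<..<b} x" for x
  have w: "integrable lebesgue w" unfolding w_def using L2_int[OF assms] integrable_indicator_Ioo by auto
  have w_bound: "cmod (u x * of_real (bump_approx a b n x)) \<le> w x" for n x
  proof (cases "x \<in> {a<..<b}")
    case True
    have "0 \<le> (cmod (u x) - 1/2)\<^sup>2" by simp
    then have "cmod (u x) \<le> (cmod (u x))\<^sup>2 + 1" by (simp add: power2_eq_square algebra_simps)
    moreover have "cmod (u x) * bump_approx a b n x \<le> cmod (u x)"
      using bump_approx_range[of a b n x] by (simp add: mult_left_le)
    ultimately show ?thesis using True bump_approx_range[of a b n x] by (simp add: w_def norm_mult)
  next
    case False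
    then have "bump_approx a b n x = 0" by (intro bump_approx_outside) auto
    then show ?thesis by (simp add: w_def)
  qed
  have lim: "AE x in lebesgue. (\<lambda>n. u x * of_real (bump_approx a b n x)) \<longlonglongrightarrow> u x * of_real (indicator {a<..<b} x)"
    by (intro AE_I2 tendsto_mult tendsto_const tendsto_of_real bump_approx_tendsto_indicator)
  show "integrable lebesgue (\<lambda>x. u x * of_real (indicator {a<..<b} x))"
    by (rule integrable_dominated_convergence[OF _ _ w lim]) (auto intro: w_bound)
  show "(\<lambda>n. \<integral>x. u x * of_real (bump_approx a b n x) \<partial>lebesgue)
           \<longlonglongrightarrow> (\<integral>x. u x * of_real (indicator {a<..<b} x) \<partial>lebesgue)"
    by (rule integral_dominated_convergence[OF _ _ w lim]) (auto intro: w_bound)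
qed

lemma AE_zero_if_test_integrals_zero:
  fixes u :: "real \<Rightarrow> complex"
  assumes u: "L2 u"
    and zero: "\<And>\<phi>. test_fun \<phi> \<Longrightarrow> (\<integral>x. u x * of_real (\<phi> x) \<partial>lebesgue) = 0"
  shows "AE x in lebesgue. u x = 0"
proof -
  have [measurable]: "u \<in> borel_measurable lebesgue" using u by (rule L2_meas)
  have Ioo_zero: "(\<integral>x. u x * of_real (indicator {a<..<b} x) \<partial>lebesgue) = 0" for a b
    using integral_bump_approx_tendsto(2)[OF u, of a b] zero[OF test_fun_bump_approx]
    by (simp add: LIMSEQ_const_iff)
  have linear_zero: "AE x in lebesgue. g (u x) = 0" if g: "bounded_linear g" for g :: "complex \<Rightarrow> real"
  proof (rule AE_zero_if_Ioo_integrals_zero)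
    interpret bounded_linear g by (rule g)
    have g_ind: "g (u x) * indicator {a<..<b} x = g (u x * of_real (indicator {a<..<b} x))" for x a b
      using scaleR[of "indicator {a<..<b} x" "u x"] by (simp add: scaleR_conv_of_real mult.commute)
    show "(\<lambda>x. g (u x)) \<in> borel_measurable lebesgue"
      using borel_measurable_continuous_onI[OF continuous_on] by measurable
    fix a b :: real
    show "integrable lebesgue (\<lambda>x. g (u x) * indicator {a<..<b} x)"
      unfolding g_ind by (rule integrable_bounded_linear[OF g integral_bump_approx_tendsto(1)[OF u]])
    show "(\<integral>x. g (u x) * indicator {a<..<b} x \<partial>lebesgue) = 0"
      unfolding g_ind integral_bounded_linear[OF g integral_bump_approx_tendsto(1)[OF u]] Ioo_zero
      by simp
  qed
  from linear_zero[OF bounded_linear_Re] linear_zero[OF bounded_linear_Im]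
  show ?thesis by eventually_elim (simp add: complex_eq_iff)
qed

lemma square_add_le: "(a + b)\<^sup>2 \<le> 2 * a\<^sup>2 + 2 * (b::real)\<^sup>2"
  using sum_squares_bound[of a b] by (simp add: power2_sum)

lemma norm_diff_square_le:
  fixes a b c :: "'a::real_normed_vector"
  shows "(norm (a - b))\<^sup>2 \<le> 2 * (norm (c - a))\<^sup>2 + 2 * (norm (c - b))\<^sup>2"
proof -
  have "norm (a - b) \<le> norm (c - a) + norm (c - b)"
    using norm_triangle_ineq4[of "c - b" "c - a"] by (simp add: norm_minus_commute)
  then have "(norm (a - b))\<^sup>2 \<le> (norm (c - a) + norm (c - b))\<^sup>2" by (intro power_mono) auto
  also have "\<dots> \<le> 2 * (norm (c - a))\<^sup>2 + 2 * (norm (c - b))\<^sup>2" by (rule square_add_le)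
  finally show ?thesis .
qed

lemma L2_add:
  assumes f: "L2 f" and g: "L2 g" shows "L2 (\<lambda>x. f x + g x)"
  unfolding L2_def
proof
  have [measurable]: "f \<in> borel_measurable lebesgue" "g \<in> borel_measurable lebesgue"
    using f g by (auto intro: L2_meas)
  show "(\<lambda>x. f x + g x) \<in> borel_measurable lebesgue" by measurable
  show "integrable lebesgue (\<lambda>x. (cmod (f x + g x))\<^sup>2)"
  proof (rule Bochner_Integration.integrable_bound)
    show "integrable lebesgue (\<lambda>x. 2 * (cmod (f x))\<^sup>2 + 2 * (cmod (g x))\<^sup>2)"
      using L2_int[OF f] L2_int[OF g] by simp
    show "(\<lambda>x. (cmod (f x + g x))\<^sup>2) \<in> borel_measurable lebesgue" by measurable
    have "(cmod (f x + g x))\<^sup>2 \<le> 2 * (cmod (f x))\<^sup>2 + 2 * (cmod (g x))\<^sup>2" for x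
      using norm_diff_square_le[of "f x" "- g x" 0]
      by (simp only: diff_minus_eq_add diff_0 norm_minus_cancel add_0_left)
    then show "AE x in lebesgue. norm ((cmod (f x + g x))\<^sup>2) \<le> norm (2 * (cmod (f x))\<^sup>2 + 2 * (cmod (g x))\<^sup>2)"
      by (intro AE_I2) simp
  qed
qed

lemma L2_scale:
  assumes f: "L2 f" shows "L2 (\<lambda>x. c * f x)"
  unfolding L2_def
proof
  have [measurable]: "f \<in> borel_measurable lebesgue" using f by (auto simp: L2_def)
  show "(\<lambda>x. c * f x) \<in> borel_measurable lebesgue" by measurable
  have "integrable lebesgue (\<lambda>x. (cmod c)\<^sup>2 * (cmod (f x))\<^sup>2)" using L2_int[OF f] by auto
  then show "integrable lebesgue (\<lambda>x. (cmod (c * f x))\<^sup>2)" by (simp add: norm_mult power_mult_distrib)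
qed

lemma L2_diff: "L2 f \<Longrightarrow> L2 g \<Longrightarrow> L2 (\<lambda>x. f x - g x)"
  using L2_add[of f "\<lambda>x. (-1) * g x"] L2_scale[of g "-1"] by simp

lemma L2_sum: "(\<And>n. n \<le> N \<Longrightarrow> L2 (F n)) \<Longrightarrow> L2 (\<lambda>x. \<Sum>n\<le>(N::nat). F n x)"
proof (induction N)
  case 0
  then show ?case by simp
next
  case (Suc N)
  then show ?case by (simp add: L2_add)
qed

lemma L2_AE_cong: "L2 f \<Longrightarrow> AE x in lebesgue. g x = f x \<Longrightarrow> L2 g"
proof -
  assume f: "L2 f" and ae: "AE x in lebesgue. g x = f x"
  have fm: "f \<in> borel_measurable lebesgue" using f by (simp add: L2_def)
  have gm: "g \<in> borel_measurable lebesgue"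
    by (rule borel_measurable_AE[OF fm]) (use ae in \<open>auto elim: eventually_mono\<close>)
  have "integrable lebesgue (\<lambda>x. (cmod (f x))\<^sup>2) \<longleftrightarrow> integrable lebesgue (\<lambda>x. (cmod (g x))\<^sup>2)"
    by (rule integrable_cong_AE) (use fm gm ae in \<open>auto elim: eventually_mono\<close>)
  then show "L2 g" using f gm by (simp add: L2_def)
qed

lemma L2_limit_unique:
  assumes P: "\<And>N. L2 (P N)" and u: "L2 u" and v: "L2 v"
    and Pu: "(\<lambda>N. \<integral>x. (cmod (P N x - u x))\<^sup>2 \<partial>lebesgue) \<longlonglongrightarrow> 0"
    and Pv: "(\<lambda>N. \<integral>x. (cmod (P N x - v x))\<^sup>2 \<partial>lebesgue) \<longlonglongrightarrow> 0"
  shows "AE x in lebesgue. u x = v x"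
proof -
  define D where "D = (\<integral>x. (cmod (u x - v x))\<^sup>2 \<partial>lebesgue)"
  have D_int: "integrable lebesgue (\<lambda>x. (cmod (u x - v x))\<^sup>2)"
    using L2_diff[OF u v] by (rule L2_int)
  have D_le: "D \<le> 2 * (\<integral>x. (cmod (P N x - u x))\<^sup>2 \<partial>lebesgue) + 2 * (\<integral>x. (cmod (P N x - v x))\<^sup>2 \<partial>lebesgue)"
    for N
  proof -
    have Pu_int: "integrable lebesgue (\<lambda>x. (cmod (P N x - u x))\<^sup>2)"
      using L2_diff[OF P u] by (rule L2_int)
    have Pv_int: "integrable lebesgue (\<lambda>x. (cmod (P N x - v x))\<^sup>2)"
      using L2_diff[OF P v] by (rule L2_int)
    have "D \<le> (\<integral>x. 2 * (cmod (P N x - u x))\<^sup>2 + 2 * (cmod (P N x - v x))\<^sup>2 \<partial>lebesgue)"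
      unfolding D_def using D_int Pu_int Pv_int norm_diff_square_le by (intro integral_mono) auto
    also have "\<dots> = 2 * (\<integral>x. (cmod (P N x - u x))\<^sup>2 \<partial>lebesgue) + 2 * (\<integral>x. (cmod (P N x - v x))\<^sup>2 \<partial>lebesgue)"
      using Pu_int Pv_int by simp
    finally show ?thesis .
  qed
  have "(\<lambda>N. 2 * (\<integral>x. (cmod (P N x - u x))\<^sup>2 \<partial>lebesgue) + 2 * (\<integral>x. (cmod (P N x - v x))\<^sup>2 \<partial>lebesgue))
      \<longlonglongrightarrow> 2 * 0 + 2 * 0"
    by (intro tendsto_intros Pu Pv)
  then have "D \<le> 2 * 0 + 2 * 0" by (rule LIMSEQ_le_const) (use D_le in auto)
  moreover have "0 \<le> D" unfolding D_def by (rule integral_nonneg_AE) auto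
  ultimately have "AE x in lebesgue. (cmod (u x - v x))\<^sup>2 = 0"
    unfolding D_def using integral_nonneg_eq_0_iff_AE[OF D_int] by simp
  then show ?thesis by eventually_elim simp
qed

section \<open>Uniqueness of weak derivatives, of \<open>t\<^sup>k f\<close> and of \<open>S\<^sub>\<epsilon> f\<close>\<close>

lemma integrable_test_fun_square:
  assumes "test_fun \<phi>" shows "integrable lebesgue (\<lambda>x. (\<phi> x)\<^sup>2)"
proof -
  obtain c where "\<And>x. x \<notin> {-c<..<c} \<Longrightarrow> \<phi> x = 0" using test_fun_supportE[OF assms] by blast
  moreover have "continuous_on UNIV \<phi>"
    using assms by (simp add: test_fun_iff smooth_continuous_on)
  then have "continuous_on UNIV (\<lambda>x. (\<phi> x)\<^sup>2)" by (intro continuous_intros)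
  ultimately show ?thesis by (intro integral_compact_support(1)[of _ "-c" c]) force+
qed

lemma integrable_L2_mult_test_fun:
  assumes g: "L2 g" and \<phi>: "test_fun \<phi>"
  shows "integrable lebesgue (\<lambda>x. g x * of_real (\<phi> x))"
proof (rule Bochner_Integration.integrable_bound)
  have sm: "smooth \<phi>" using \<phi> by (simp add: test_fun_iff)
  have [measurable]: "g \<in> borel_measurable lebesgue" using g by (simp add: L2_def)
  have [measurable]: "\<phi> \<in> borel_measurable lebesgue" by (rule continuous_on_borel_measurable_lebesgue[OF smooth_continuous_on[OF sm]])
  show "integrable lebesgue (\<lambda>x. (cmod (g x))\<^sup>2 + (\<phi> x)\<^sup>2)"
    using L2_int[OF g] integrable_test_fun_square[OF \<phi>] by auto
  show "(\<lambda>x. g x * of_real (\<phi> x)) \<in> borel_measurable lebesgue" by measurable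
  show "AE x in lebesgue. norm (g x * of_real (\<phi> x)) \<le> norm ((cmod (g x))\<^sup>2 + (\<phi> x)\<^sup>2)"
  proof (intro AE_I2)
    fix x
    have "2 * (cmod (g x) * \<bar>\<phi> x\<bar>) \<le> (cmod (g x))\<^sup>2 + (\<phi> x)\<^sup>2"
      using sum_squares_bound[of "cmod (g x)" "\<bar>\<phi> x\<bar>"] by (simp add: mult.assoc)
    moreover have "0 \<le> cmod (g x) * \<bar>\<phi> x\<bar>" by simp
    ultimately have "cmod (g x) * \<bar>\<phi> x\<bar> \<le> (cmod (g x))\<^sup>2 + (\<phi> x)\<^sup>2" by linarith
    then show "norm (g x * of_real (\<phi> x)) \<le> norm ((cmod (g x))\<^sup>2 + (\<phi> x)\<^sup>2)"
      by (simp add: norm_mult)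
  qed
qed

lemma weak_deriv_if_continuous_derivative:
  fixes F F' :: "real \<Rightarrow> complex"
  assumes F: "\<And>x. (F has_vector_derivative F' x) (at x)" and F'_cont: "continuous_on UNIV F'"
  shows "weak_deriv F F'"
  unfolding weak_deriv_def
proof (intro allI impI)
  fix \<phi> assume "test_fun \<phi>"
  then obtain c where c: "-c \<le> c" and \<phi>_0: "\<And>x. x \<notin> {-c<..<c} \<Longrightarrow> \<phi> x = 0"
    and \<phi>'_0: "\<And>x. x \<notin> {-c<..<c} \<Longrightarrow> deriv \<phi> x = 0"
    by (elim test_fun_supportE) auto
  have \<phi>: "smooth \<phi>" using \<open>test_fun \<phi>\<close> by (simp add: test_fun_iff)
  have F_cont: "continuous_on UNIV F"
    using F by (meson continuous_at_imp_continuous_on has_vector_derivative_continuous)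
  have FF'_cont: "continuous_on UNIV (\<lambda>x. F x * of_real (deriv \<phi> x))"
    "continuous_on UNIV (\<lambda>x. F' x * of_real (\<phi> x))"
    using F_cont F'_cont smooth_continuous_on[OF \<phi>] smooth_continuous_on[OF smooth_deriv[OF \<phi>]]
    by (auto intro!: continuous_intros)
  have "((\<lambda>x. F' x * of_real (\<phi> x)) has_integral - integral {-c..c} (\<lambda>x. F x * of_real (deriv \<phi> x))) {-c..c}"
  proof (rule integration_by_parts[OF bounded_bilinear_mult c])
    show "continuous_on {-c..c} F" "continuous_on {-c..c} (\<lambda>x. complex_of_real (\<phi> x))"
      using F_cont smooth_continuous_on[OF \<phi>]
      by (auto intro!: continuous_intros intro: continuous_on_subset)
    show "((\<lambda>x. complex_of_real (\<phi> x)) has_vector_derivative of_real (deriv \<phi> x)) (at x)" for x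
      by (rule has_vector_derivative_of_real[OF smooth_has_real_derivative[OF \<phi>]])
    show "(F has_vector_derivative F' x) (at x)" for x by (rule F)
    have "((\<lambda>x. F x * of_real (deriv \<phi> x)) has_integral integral {-c..c} (\<lambda>x. F x * of_real (deriv \<phi> x))) {-c..c}"
      by (intro integrable_integral integrable_continuous_real continuous_on_subset[OF FF'_cont(1)]) auto
    moreover have "\<phi> c = 0" "\<phi> (-c) = 0" using \<phi>_0 by auto
    ultimately show "((\<lambda>x. F x * complex_of_real (deriv \<phi> x)) has_integral
        F c * of_real (\<phi> c) - F (- c) * of_real (\<phi> (- c)) - - integral {-c..c} (\<lambda>x. F x * of_real (deriv \<phi> x))) {-c..c}"
      by simp
  qed
  then have "integral {-c..c} (\<lambda>x. F' x * of_real (\<phi> x)) = - integral {-c..c} (\<lambda>x. F x * of_real (deriv \<phi> x))"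
    by (rule integral_unique)
  moreover have "(\<integral>x. F x * of_real (deriv \<phi> x) \<partial>lebesgue) = integral {-c..c} (\<lambda>x. F x * of_real (deriv \<phi> x))"
    by (intro integral_compact_support(2) FF'_cont) (use \<phi>'_0 in force)
  moreover have "(\<integral>x. F' x * of_real (\<phi> x) \<partial>lebesgue) = integral {-c..c} (\<lambda>x. F' x * of_real (\<phi> x))"
    by (intro integral_compact_support(2) FF'_cont) (use \<phi>_0 in force)
  ultimately show "(\<integral>x. F x * of_real (deriv \<phi> x) \<partial>lebesgue) = - (\<integral>x. F' x * of_real (\<phi> x) \<partial>lebesgue)"
    by simp
qed

lemma weak_deriv_unique:
  assumes d1: "weak_deriv f1 g1" and d2: "weak_deriv f2 g2"
    and "L2 f1" "L2 f2" and g1: "L2 g1" and g2: "L2 g2"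
    and f: "AE x in lebesgue. f1 x = f2 x"
  shows "AE x in lebesgue. g1 x = g2 x"
proof -
  have "AE x in lebesgue. g1 x - g2 x = 0"
  proof (rule AE_zero_if_test_integrals_zero)
    show "L2 (\<lambda>x. g1 x - g2 x)" by (rule L2_diff[OF g1 g2])
    fix \<phi> :: "real \<Rightarrow> real" assume \<phi>: "test_fun \<phi>"
    have [measurable]: "deriv \<phi> \<in> borel_measurable lebesgue"
      using \<phi> by (intro continuous_on_borel_measurable_lebesgue smooth_continuous_on smooth_deriv)
        (simp add: test_fun_iff)
    have [measurable]: "f1 \<in> borel_measurable lebesgue" "f2 \<in> borel_measurable lebesgue"
      using \<open>L2 f1\<close> \<open>L2 f2\<close> by (auto intro: L2_meas)
    have "(\<integral>x. f1 x * of_real (deriv \<phi> x) \<partial>lebesgue) = (\<integral>x. f2 x * of_real (deriv \<phi> x) \<partial>lebesgue)"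
      by (rule integral_cong_AE) (use f in \<open>auto elim: eventually_mono\<close>)
    then have "(\<integral>x. g1 x * of_real (\<phi> x) \<partial>lebesgue) = (\<integral>x. g2 x * of_real (\<phi> x) \<partial>lebesgue)"
      using d1 d2 \<phi> unfolding weak_deriv_def by simp
    then show "(\<integral>x. (g1 x - g2 x) * of_real (\<phi> x) \<partial>lebesgue) = 0"
      using integrable_L2_mult_test_fun[OF g1 \<phi>] integrable_L2_mult_test_fun[OF g2 \<phi>]
      by (simp add: left_diff_distrib)
  qed
  then show ?thesis by eventually_elim simp
qed

lemma AE_lebesgue_nonzero: "AE x in lebesgue. x \<noteq> (0::real)"
  by (rule AE_completion[OF AE_lborel_singleton])

lemma t_rel_unique:
  assumes t1: "t_rel f1 h1" and t2: "t_rel f2 h2" and f: "AE x in lebesgue. f1 x = f2 x"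
  shows "AE x in lebesgue. h1 x = h2 x"
proof -
  obtain g1 where p1: "p_rel f1 g1" and g1: "AE x in lebesgue. g1 x = of_real x * h1 x"
    using t1 by (auto simp: t_rel_def)
  obtain g2 where p2: "p_rel f2 g2" and g2: "AE x in lebesgue. g2 x = of_real x * h2 x"
    using t2 by (auto simp: t_rel_def)
  have "AE x in lebesgue. \<i> * g1 x = \<i> * g2 x"
  proof (rule weak_deriv_unique[OF _ _ _ _ L2_scale L2_scale f])
    show "weak_deriv f1 (\<lambda>x. \<i> * g1 x)" "L2 f1" "L2 g1" using p1 by (simp_all add: p_rel_def)
    show "weak_deriv f2 (\<lambda>x. \<i> * g2 x)" "L2 f2" "L2 g2" using p2 by (simp_all add: p_rel_def)
  qed
  with g1 g2 AE_lebesgue_nonzero show ?thesis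
    by eventually_elim auto
qed

lemma t_pow_unique:
  fixes k :: nat and f f' h1 h2 :: "real \<Rightarrow> complex"
  shows "t_pow k f h1 \<Longrightarrow> t_pow k f' h2 \<Longrightarrow> AE x in lebesgue. f x = f' x \<Longrightarrow> AE x in lebesgue. h1 x = h2 x"
proof (induction k arbitrary: f f' h1 h2)
  case 0
  then have a: "AE x in lebesgue. h1 x = f x" "AE x in lebesgue. h2 x = f' x" "AE x in lebesgue. f x = f' x"
    by auto
  from a show ?case by eventually_elim auto
next
  case (Suc k)
  obtain g1 where g1: "t_rel f g1" "t_pow k g1 h1" using Suc.prems by auto
  obtain g2 where g2: "t_rel f' g2" "t_pow k g2 h2" using Suc.prems by auto
  have "AE x in lebesgue. g1 x = g2 x" by (rule t_rel_unique[OF g1(1) g2(1) Suc.prems(3)])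
  then show ?case by (rule Suc.IH[OF g1(2) g2(2)])
qed

lemma t_pow_L2: "t_pow k f h \<Longrightarrow> L2 h"
proof (induction k arbitrary: f)
  case 0
  then show ?case using L2_AE_cong by auto
next
  case (Suc k)
  then show ?case by auto
qed

definition S_weight :: "real \<Rightarrow> nat \<Rightarrow> real" where
  "S_weight \<epsilon> n = (-1) ^ n / real (2 * n + 1) * sqrt \<epsilon> ^ (2 * n + 1)"

lemma S_rel_iff:
  "S_rel \<epsilon> f h \<longleftrightarrow> L2_even f \<and> L2 h \<and>
     (\<exists>T. (\<forall>n. t_pow (2 * n + 1) f (T n)) \<and>
        (\<lambda>N. \<integral>x. (cmod ((\<Sum>n\<le>N. of_real (S_weight \<epsilon> n) * T n x) - of_real (- sqrt \<epsilon>) * h x))\<^sup>2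
           \<partial>lebesgue) \<longlonglongrightarrow> 0)"
  by (simp add: S_rel_def S_weight_def)

lemma S_rel_unique:
  assumes "0 < \<epsilon>" and S1: "S_rel \<epsilon> f h1" and S2: "S_rel \<epsilon> f h2"
  shows "AE x in lebesgue. h1 x = h2 x"
proof -
  define P where "P T N x = (\<Sum>n\<le>N. of_real (S_weight \<epsilon> n) * T n x)"
    for T :: "nat \<Rightarrow> real \<Rightarrow> complex" and N x
  define c :: complex where "c = of_real (- sqrt \<epsilon>)"
  obtain T1 where h1: "L2 h1" and T1: "\<And>n. t_pow (2 * n + 1) f (T1 n)"
    and lim1: "(\<lambda>N. \<integral>x. (cmod (P T1 N x - c * h1 x))\<^sup>2 \<partial>lebesgue) \<longlonglongrightarrow> 0"
    using S1 unfolding S_rel_iff P_def c_def by blast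
  obtain T2 where h2: "L2 h2" and T2: "\<And>n. t_pow (2 * n + 1) f (T2 n)"
    and lim2: "(\<lambda>N. \<integral>x. (cmod (P T2 N x - c * h2 x))\<^sup>2 \<partial>lebesgue) \<longlonglongrightarrow> 0"
    using S2 unfolding S_rel_iff P_def c_def by blast
  have P_L2: "L2 (P T1 N)" for N
    unfolding P_def[abs_def] by (intro L2_sum L2_scale t_pow_L2[OF T1])
  have "AE x in lebesgue. \<forall>n. T2 n x = T1 n x"
    using t_pow_unique[OF T2 T1] by (simp add: AE_all_countable)
  then have P_ae: "AE x in lebesgue. P T2 N x = P T1 N x" for N
    by eventually_elim (simp add: P_def)
  have "(\<integral>x. (cmod (P T2 N x - c * h2 x))\<^sup>2 \<partial>lebesgue) = (\<integral>x. (cmod (P T1 N x - c * h2 x))\<^sup>2 \<partial>lebesgue)"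
    for N
  proof (intro integral_cong_AE)
    have [measurable]: "T1 n \<in> borel_measurable lebesgue" "T2 n \<in> borel_measurable lebesgue" for n
      using t_pow_L2[OF T1] t_pow_L2[OF T2] by (auto intro: L2_meas)
    have [measurable]: "h2 \<in> borel_measurable lebesgue" using h2 by (rule L2_meas)
    show "(\<lambda>x. (cmod (P T2 N x - c * h2 x))\<^sup>2) \<in> borel_measurable lebesgue"
      "(\<lambda>x. (cmod (P T1 N x - c * h2 x))\<^sup>2) \<in> borel_measurable lebesgue"
      unfolding P_def by measurable
    show "AE x in lebesgue. (cmod (P T2 N x - c * h2 x))\<^sup>2 = (cmod (P T1 N x - c * h2 x))\<^sup>2"
      using P_ae[of N] by eventually_elim simp
  qed
  with lim2 have lim2': "(\<lambda>N. \<integral>x. (cmod (P T1 N x - c * h2 x))\<^sup>2 \<partial>lebesgue) \<longlonglongrightarrow> 0" by simp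
  have "AE x in lebesgue. c * h1 x = c * h2 x"
    by (rule L2_limit_unique[OF P_L2 L2_scale[OF h1] L2_scale[OF h2] lim1 lim2'])
  moreover have "c \<noteq> 0" using \<open>0 < \<epsilon>\<close> by (simp add: c_def)
  ultimately show ?thesis by (auto elim: eventually_mono)
qed

section \<open>Gaussians times even polynomials\<close>

definition gaussian :: "real \<Rightarrow> real \<Rightarrow> real" where
  "gaussian \<kappa> x = exp (- (\<kappa> * x\<^sup>2 / 2))"

lemma gaussian_pos: "0 < gaussian \<kappa> x" by (simp add: gaussian_def)

lemma integrable_power_mult_gaussian:
  assumes d: "0 < d"
  shows "integrable lebesgue (\<lambda>x::real. x ^ k * exp (- (d * x\<^sup>2)))"
proof -
  define \<sigma> where "\<sigma> = 1 / sqrt (2*d)"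
  have sp: "0 < \<sigma>" using d by (simp add: \<sigma>_def)
  have \<sigma>2: "\<sigma>\<^sup>2 = 1/(2*d)" using d by (simp add: \<sigma>_def power_divide)
  have "integrable lborel (\<lambda>x. normal_density 0 \<sigma> x * (x - 0)^k)"
    by (rule integrable_normal_moment[OF sp])
  then have X: "integrable lborel (\<lambda>x. sqrt (2*pi*\<sigma>\<^sup>2) * (normal_density 0 \<sigma> x * (x - 0)^k))"
    by (intro integrable_mult_right)
  have eq: "(\<lambda>x. sqrt (2*pi*\<sigma>\<^sup>2) * (normal_density 0 \<sigma> x * (x - 0)^k)) = (\<lambda>x. x ^ k * exp (- (d * x\<^sup>2)))"
    using d sp by (simp add: normal_density_def \<sigma>2 field_simps fun_eq_iff)
  have "integrable lborel (\<lambda>x::real. x ^ k * exp (- (d * x\<^sup>2)))" using X unfolding eq .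
  then show ?thesis
    by (subst integrable_completion) auto
qed

lemma power_le_1_plus_power: "0 \<le> (y::real) \<Longrightarrow> e \<le> m \<Longrightarrow> y ^ e \<le> 1 + y ^ m"
  by (cases "y \<le> 1") (auto intro: order_trans[OF power_le_one] order_trans[OF power_increasing])

lemma L2_if_gaussian_bound:
  assumes k: "0 < \<kappa>" and hm: "h \<in> borel_measurable lebesgue"
  assumes b: "\<And>x. cmod (h x) \<le> C * (1 + \<bar>x\<bar> ^ N) * gaussian \<kappa> x"
  shows "L2 h"
  unfolding L2_def
proof (intro conjI hm)
  let ?f = "\<lambda>x::real. 2 * C\<^sup>2 * (x ^ 0 * exp (- (\<kappa> * x\<^sup>2)) + x ^ (2*N) * exp (- (\<kappa> * x\<^sup>2)))"
  have fi: "integrable lebesgue ?f"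
    using integrable_power_mult_gaussian[OF k, of 0] integrable_power_mult_gaussian[OF k, of "2*N"] by (intro integrable_mult_right integrable_add) auto
  show "integrable lebesgue (\<lambda>x. (cmod (h x))\<^sup>2)"
  proof (rule Bochner_Integration.integrable_bound[OF fi])
    show "(\<lambda>x. (cmod (h x))\<^sup>2) \<in> borel_measurable lebesgue" using hm by measurable
    show "AE x in lebesgue. norm ((cmod (h x))\<^sup>2) \<le> norm (?f x)"
    proof (intro AE_I2)
      fix x :: real
      have x2: "(gaussian \<kappa> x)\<^sup>2 = exp (- (\<kappa> * x\<^sup>2))"
        by (simp add: gaussian_def power2_eq_square exp_add[symmetric])
      have a: "\<bar>x\<bar> ^ (2*N) = x ^ (2*N)" by (simp add: power_even_abs)
      have "(cmod (h x))\<^sup>2 \<le> (C * (1 + \<bar>x\<bar> ^ N) * gaussian \<kappa> x)\<^sup>2"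
        using b[of x] by (intro power_mono) auto
      also have "\<dots> = C\<^sup>2 * (1 + \<bar>x\<bar> ^ N)\<^sup>2 * exp (- (\<kappa> * x\<^sup>2))"
        by (simp add: power_mult_distrib x2)
      also have "\<dots> \<le> C\<^sup>2 * (2 * (1 + \<bar>x\<bar> ^ (2*N))) * exp (- (\<kappa> * x\<^sup>2))"
      proof -
        have "\<bar>x\<bar> ^ (2*N) = (\<bar>x\<bar> ^ N)\<^sup>2" by (simp add: power_mult[symmetric] mult.commute)
        then have "(1 + \<bar>x\<bar> ^ N)\<^sup>2 \<le> 2 * (1 + \<bar>x\<bar> ^ (2*N))"
          using square_add_le[of 1 "\<bar>x\<bar> ^ N"] by simp
        then show ?thesis by (intro mult_right_mono mult_left_mono) auto
      qed
      also have "\<dots> = ?f x" using a by (simp add: algebra_simps)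
      finally show "norm ((cmod (h x))\<^sup>2) \<le> norm (?f x)" by simp
    qed
  qed
qed

definition gauss_poly :: "real \<Rightarrow> nat \<Rightarrow> (nat \<Rightarrow> complex) \<Rightarrow> real \<Rightarrow> complex" where
  "gauss_poly \<kappa> m a x = (\<Sum>j\<le>m. a j * of_real ((x\<^sup>2) ^ (m - j))) * of_real (gaussian \<kappa> x)"

lemma continuous_on_gauss_poly: "continuous_on UNIV (gauss_poly \<kappa> m a)"
  unfolding gauss_poly_def[abs_def] gaussian_def by (intro continuous_intros) auto

lemma gauss_poly_measurable: "gauss_poly \<kappa> m a \<in> borel_measurable lebesgue"
  by (rule continuous_on_borel_measurable_lebesgue[OF continuous_on_gauss_poly])

lemma norm_gauss_poly_le: "cmod (gauss_poly \<kappa> m a x) \<le> (\<Sum>j\<le>m. cmod (a j)) * (1 + \<bar>x\<bar> ^ (2*m)) * gaussian \<kappa> x"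
proof -
  have "cmod (\<Sum>j\<le>m. a j * of_real ((x\<^sup>2) ^ (m - j))) \<le> (\<Sum>j\<le>m. cmod (a j * of_real ((x\<^sup>2) ^ (m - j))))"
    by (rule norm_sum)
  also have "\<dots> \<le> (\<Sum>j\<le>m. cmod (a j) * (1 + \<bar>x\<bar> ^ (2*m)))"
  proof (rule sum_mono)
    fix j assume "j \<in> {..m}"
    have "(x\<^sup>2) ^ (m - j) \<le> 1 + (x\<^sup>2) ^ m" by (rule power_le_1_plus_power) auto
    also have "(x\<^sup>2) ^ m = \<bar>x\<bar> ^ (2*m)" by (simp add: power_mult power_even_abs)
    finally have le: "(x\<^sup>2) ^ (m - j) \<le> 1 + \<bar>x\<bar> ^ (2*m)" .
    have "cmod (a j * of_real ((x\<^sup>2) ^ (m - j))) = cmod (a j) * \<bar>(x\<^sup>2) ^ (m - j)\<bar>"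
      by (simp only: norm_mult norm_of_real)
    also have "\<dots> = cmod (a j) * (x\<^sup>2) ^ (m - j)" by simp
    also have "\<dots> \<le> cmod (a j) * (1 + \<bar>x\<bar> ^ (2*m))" using le by (simp add: mult_left_mono)
    finally show "cmod (a j * of_real ((x\<^sup>2) ^ (m - j))) \<le> cmod (a j) * (1 + \<bar>x\<bar> ^ (2*m))" .
  qed
  also have "\<dots> = (\<Sum>j\<le>m. cmod (a j)) * (1 + \<bar>x\<bar> ^ (2*m))" by (simp add: sum_distrib_right)
  finally have "cmod (\<Sum>j\<le>m. a j * of_real ((x\<^sup>2) ^ (m - j))) \<le> (\<Sum>j\<le>m. cmod (a j)) * (1 + \<bar>x\<bar> ^ (2*m))" .
  then show ?thesis unfolding gauss_poly_def norm_mult using gaussian_pos[of \<kappa> x]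
    by (simp add: mult_right_mono)
qed

lemma L2_gauss_poly: "0 < \<kappa> \<Longrightarrow> L2 (gauss_poly \<kappa> m a)"
  by (rule L2_if_gaussian_bound[OF _ gauss_poly_measurable norm_gauss_poly_le])

lemma L2_x_mult_gauss_poly:
  assumes k: "0 < \<kappa>" shows "L2 (\<lambda>x. of_real x * gauss_poly \<kappa> m a x)"
proof (rule L2_if_gaussian_bound[OF k])
  show "(\<lambda>x. complex_of_real x * gauss_poly \<kappa> m a x) \<in> borel_measurable lebesgue"
    using gauss_poly_measurable by measurable
  fix x :: real
  let ?S = "\<Sum>j\<le>m. cmod (a j)"
  have S0: "0 \<le> ?S" by (simp add: sum_nonneg)
  have "cmod (of_real x * gauss_poly \<kappa> m a x) = \<bar>x\<bar> * cmod (gauss_poly \<kappa> m a x)" by (simp add: norm_mult)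
  also have "\<dots> \<le> \<bar>x\<bar> * (?S * (1 + \<bar>x\<bar> ^ (2*m)) * gaussian \<kappa> x)"
    by (intro mult_left_mono norm_gauss_poly_le) auto
  also have "\<dots> = ?S * (\<bar>x\<bar> ^ 1 + \<bar>x\<bar> ^ (2*m+1)) * gaussian \<kappa> x" by (simp add: algebra_simps)
  also have "\<dots> \<le> ?S * (2 * (1 + \<bar>x\<bar> ^ (2*m+1))) * gaussian \<kappa> x"
  proof -
    have "\<bar>x\<bar> ^ 1 \<le> 1 + \<bar>x\<bar> ^ (2*m+1)" by (rule power_le_1_plus_power) auto
    then have "\<bar>x\<bar> ^ 1 + \<bar>x\<bar> ^ (2*m+1) \<le> 2 * (1 + \<bar>x\<bar> ^ (2*m+1))" by simp
    then show ?thesis using S0 gaussian_pos[of \<kappa> x] by (intro mult_right_mono mult_left_mono) auto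
  qed
  also have "\<dots> = (2 * ?S) * (1 + \<bar>x\<bar> ^ (2*m+1)) * gaussian \<kappa> x" by simp
  finally show "cmod (of_real x * gauss_poly \<kappa> m a x) \<le> (2 * ?S) * (1 + \<bar>x\<bar> ^ (2*m+1)) * gaussian \<kappa> x" .
qed

text \<open>\<open>t\<close> acts on the coefficients of \<open>gauss_poly\<close>:
  \<open>(x\<^bsup>2k\<^esup> \<xi>)' / x = (2k x\<^bsup>2k-2\<^esup> - \<kappa> x\<^bsup>2k\<^esup>) \<xi>\<close>.\<close>

definition t_coeffs :: "real \<Rightarrow> nat \<Rightarrow> (nat \<Rightarrow> complex) \<Rightarrow> nat \<Rightarrow> complex" where
  "t_coeffs \<kappa> m a j = \<i> * of_real \<kappa> * a j - (if j = 0 then 0 else 2 * \<i> * of_nat (m - j + 1) * a (j - 1))"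

text \<open>The complex extension lets the derivative be computed with the rules for \<open>has_field_derivative\<close>.\<close>

definition gauss_poly_complex :: "real \<Rightarrow> nat \<Rightarrow> (nat \<Rightarrow> complex) \<Rightarrow> complex \<Rightarrow> complex" where
  "gauss_poly_complex \<kappa> m a z = (\<Sum>j\<le>m. a j * (z\<^sup>2) ^ (m - j)) * exp (- (of_real \<kappa> * z\<^sup>2 / 2))"

lemma gauss_poly_eq_complex: "gauss_poly \<kappa> m a x = gauss_poly_complex \<kappa> m a (of_real x)"
proof -
  have "of_real (gaussian \<kappa> x) = exp (- (of_real \<kappa> * (of_real x)\<^sup>2 / 2) :: complex)"
    unfolding gaussian_def exp_of_real[symmetric] by simp
  then show ?thesis unfolding gauss_poly_def gauss_poly_complex_def by simp
qed

lemma sum_shift_index: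
  fixes y :: complex and g :: "nat \<Rightarrow> complex"
  shows "(\<Sum>j\<le>m. of_nat (m - j) * g j * y ^ (m - j - 1))
       = (\<Sum>j\<le>m. (if j = 0 then 0 else of_nat (m - j + 1) * g (j - 1) * y ^ (m - j)))"
proof (cases m)
  case 0
  then show ?thesis by simp
next
  case (Suc n)
  have "(\<Sum>j\<le>m. (if j = 0 then 0 else of_nat (m - j + 1) * g (j - 1) * y ^ (m - j)))
      = (\<Sum>j\<le>n. of_nat (n - j + 1) * g j * y ^ (n - j))"
    unfolding Suc sum.atMost_Suc_shift by simp
  also have "\<dots> = (\<Sum>j\<le>n. of_nat (m - j) * g j * y ^ (m - j - 1))"
    by (rule sum.cong) (auto simp: Suc Suc_diff_le)
  also have "\<dots> = (\<Sum>j\<le>m. of_nat (m - j) * g j * y ^ (m - j - 1))"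
    unfolding Suc sum.atMost_Suc by simp
  finally show ?thesis by simp
qed

lemma gauss_poly_complex_has_derivative:
  "(gauss_poly_complex \<kappa> m a has_field_derivative (\<i> * z * gauss_poly_complex \<kappa> m (t_coeffs \<kappa> m a) z)) (at z)"
proof -
  define E where "E = exp (- (of_real \<kappa> * z\<^sup>2 / 2))"
  define S1 where "S1 = (\<Sum>j\<le>m. a j * (z\<^sup>2) ^ (m - j))"
  define S2 where "S2 = (\<Sum>j\<le>m. of_nat (m - j) * a j * (z\<^sup>2) ^ (m - j - 1))"
  define S3 where "S3 = (\<Sum>j\<le>m. a j * (of_nat (m - j) * (2 * z * (z\<^sup>2) ^ (m - j - 1))))"
  have d1: "((\<lambda>z. \<Sum>j\<le>m. a j * (z\<^sup>2) ^ (m - j)) has_field_derivative S3) (at z)"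
    unfolding S3_def by (intro DERIV_sum DERIV_cmult DERIV_power) (auto intro!: derivative_eq_intros)
  have d2: "((\<lambda>z. exp (- (of_real \<kappa> * z\<^sup>2 / 2))) has_field_derivative E * (- (of_real \<kappa> * z))) (at z)"
    unfolding E_def by (auto intro!: derivative_eq_intros)
  have d: "(gauss_poly_complex \<kappa> m a has_field_derivative S1 * (E * (- (of_real \<kappa> * z))) + S3 * E) (at z)"
    unfolding gauss_poly_complex_def[abs_def] using DERIV_mult'[OF d1 d2] by (simp add: E_def S1_def)
  have S3: "S3 = 2 * z * S2"
    unfolding S3_def S2_def sum_distrib_left by (rule sum.cong) (simp_all add: mult_ac)
  have t: "\<i> * t_coeffs \<kappa> m a j * (z\<^sup>2) ^ (m - j) = - (of_real \<kappa> * (a j * (z\<^sup>2) ^ (m - j)))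
          + 2 * (if j = 0 then 0 else of_nat (m - j + 1) * a (j - 1) * (z\<^sup>2) ^ (m - j))" for j
    by (simp add: t_coeffs_def algebra_simps)
  have s: "(\<Sum>j\<le>m. \<i> * t_coeffs \<kappa> m a j * (z\<^sup>2) ^ (m - j)) = - (of_real \<kappa> * S1) + 2 * S2"
    unfolding t S1_def S2_def sum_shift_index by (simp add: sum_subtractf sum_distrib_left sum_negf)
  have "\<i> * z * gauss_poly_complex \<kappa> m (t_coeffs \<kappa> m a) z = z * E * (\<Sum>j\<le>m. \<i> * t_coeffs \<kappa> m a j * (z\<^sup>2) ^ (m - j))"
    unfolding gauss_poly_complex_def E_def by (simp add: sum_distrib_left algebra_simps)
  also have "\<dots> = S1 * (E * (- (of_real \<kappa> * z))) + S3 * E"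
    unfolding s S3 by (simp add: algebra_simps)
  finally show ?thesis using d by simp
qed

lemma gauss_poly_has_vector_derivative:
  "(gauss_poly \<kappa> m a has_vector_derivative (\<i> * (of_real x * gauss_poly \<kappa> m (t_coeffs \<kappa> m a) x))) (at x)"
proof -
  have "((\<lambda>x. gauss_poly_complex \<kappa> m a (of_real x)) has_vector_derivative (\<i> * of_real x * gauss_poly_complex \<kappa> m (t_coeffs \<kappa> m a) (of_real x))) (at x)"
    by (rule has_vector_derivative_real_field[OF gauss_poly_complex_has_derivative])
  then show ?thesis unfolding gauss_poly_eq_complex[abs_def] by (simp add: mult.assoc)
qed

lemma t_rel_gauss_poly:
  assumes k: "0 < \<kappa>"
  shows "t_rel (gauss_poly \<kappa> m a) (gauss_poly \<kappa> m (t_coeffs \<kappa> m a))"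
  unfolding t_rel_def p_rel_def
proof (intro exI[of _ "\<lambda>x. of_real x * gauss_poly \<kappa> m (t_coeffs \<kappa> m a) x"] conjI allI impI)
  show "L2 (gauss_poly \<kappa> m a)" "L2 (gauss_poly \<kappa> m (t_coeffs \<kappa> m a))" using L2_gauss_poly[OF k] by auto
  show "L2 (\<lambda>x. of_real x * gauss_poly \<kappa> m (t_coeffs \<kappa> m a) x)" by (rule L2_x_mult_gauss_poly[OF k])
  show "AE x in lebesgue. of_real x * gauss_poly \<kappa> m (t_coeffs \<kappa> m a) x = of_real x * gauss_poly \<kappa> m (t_coeffs \<kappa> m a) x"
    by simp
  show "weak_deriv (gauss_poly \<kappa> m a) (\<lambda>x. \<i> * (of_real x * gauss_poly \<kappa> m (t_coeffs \<kappa> m a) x))"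
    by (intro weak_deriv_if_continuous_derivative gauss_poly_has_vector_derivative continuous_intros
        continuous_on_gauss_poly)
qed

lemma gauss_poly_cong: "(\<And>j. j \<le> m \<Longrightarrow> a j = b j) \<Longrightarrow> gauss_poly \<kappa> m a = gauss_poly \<kappa> m b"
  unfolding gauss_poly_def[abs_def] by (intro ext arg_cong2[where f="(*)"] sum.cong) auto

lemma gauss_poly_sum: "gauss_poly \<kappa> m (\<lambda>j. \<Sum>n\<le>M. c n * b n j) x = (\<Sum>n\<le>M. c n * gauss_poly \<kappa> m (b n) x)"
  unfolding gauss_poly_def sum_distrib_right sum_distrib_left
  by (subst sum.swap) (simp add: mult_ac)

lemma gauss_poly_diff: "gauss_poly \<kappa> m (\<lambda>j. a j - b j) x = gauss_poly \<kappa> m a x - gauss_poly \<kappa> m b x"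
  unfolding gauss_poly_def by (simp add: sum_subtractf algebra_simps)

lemma gauss_poly_scale: "gauss_poly \<kappa> m (\<lambda>j. c * a j) x = c * gauss_poly \<kappa> m a x"
  unfolding gauss_poly_def by (simp add: sum_distrib_left algebra_simps)

lemma gauss_poly_even: "gauss_poly \<kappa> m a (- x) = gauss_poly \<kappa> m a x"
  unfolding gauss_poly_def gaussian_def by simp

lemma gauss_poly_L2_tendsto_0:
  assumes k: "0 < \<kappa>" and d: "\<And>j. j \<le> m \<Longrightarrow> (\<lambda>N. \<delta> N j) \<longlonglongrightarrow> 0"
  shows "(\<lambda>N. \<integral>x. (cmod (gauss_poly \<kappa> m (\<delta> N) x))\<^sup>2 \<partial>lebesgue) \<longlonglongrightarrow> 0"
proof -
  define B where "B x = (1 + \<bar>x\<bar> ^ (2*m)) * gaussian \<kappa> x" for x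
  have "L2 (\<lambda>x. complex_of_real (B x))"
  proof (rule L2_if_gaussian_bound[OF k, where C=1 and N="2*m"])
    show "(\<lambda>x. complex_of_real (B x)) \<in> borel_measurable lebesgue"
      unfolding B_def gaussian_def by (intro continuous_on_borel_measurable_lebesgue continuous_intros) auto
    fix x show "cmod (complex_of_real (B x)) \<le> 1 * (1 + \<bar>x\<bar> ^ (2*m)) * gaussian \<kappa> x"
      unfolding B_def norm_of_real using gaussian_pos[of \<kappa> x] by (simp add: abs_mult)
  qed
  then have Bi: "integrable lebesgue (\<lambda>x. (B x)\<^sup>2)" by (simp add: L2_def)
  define K where "K = (\<integral>x. (B x)\<^sup>2 \<partial>lebesgue)"
  define S where "S N = (\<Sum>j\<le>m. cmod (\<delta> N j))" for N
  have S: "(\<lambda>N. S N) \<longlonglongrightarrow> 0"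
  proof -
    have "(\<lambda>N. \<Sum>j\<le>m. cmod (\<delta> N j)) \<longlonglongrightarrow> (\<Sum>j\<le>m. 0)"
      by (intro tendsto_sum tendsto_norm_zero d) auto
    then show ?thesis by (simp add: S_def)
  qed
  have S0: "0 \<le> S N" for N by (simp add: S_def sum_nonneg)
  have ptw: "(cmod (gauss_poly \<kappa> m (\<delta> N) x))\<^sup>2 \<le> (S N)\<^sup>2 * (B x)\<^sup>2" for N x
  proof -
    have "cmod (gauss_poly \<kappa> m (\<delta> N) x) \<le> S N * B x" using norm_gauss_poly_le[of \<kappa> m "\<delta> N" x] by (simp add: S_def B_def mult.assoc)
    then have "(cmod (gauss_poly \<kappa> m (\<delta> N) x))\<^sup>2 \<le> (S N * B x)\<^sup>2" by (intro power_mono) auto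
    then show ?thesis by (simp add: power_mult_distrib)
  qed
  have Gi: "integrable lebesgue (\<lambda>x. (cmod (gauss_poly \<kappa> m (\<delta> N) x))\<^sup>2)" for N
    using L2_gauss_poly[OF k] by (simp add: L2_def)
  show ?thesis
  proof (rule tendsto_sandwich[where f="\<lambda>N. 0" and h="\<lambda>N. (S N)\<^sup>2 * K"])
    show "\<forall>\<^sub>F N in sequentially. 0 \<le> (\<integral>x. (cmod (gauss_poly \<kappa> m (\<delta> N) x))\<^sup>2 \<partial>lebesgue)"
      by (intro always_eventually allI integral_nonneg_AE) auto
    show "\<forall>\<^sub>F N in sequentially. (\<integral>x. (cmod (gauss_poly \<kappa> m (\<delta> N) x))\<^sup>2 \<partial>lebesgue) \<le> (S N)\<^sup>2 * K"
    proof (intro always_eventually allI)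
      fix N
      have "(\<integral>x. (cmod (gauss_poly \<kappa> m (\<delta> N) x))\<^sup>2 \<partial>lebesgue) \<le> (\<integral>x. (S N)\<^sup>2 * (B x)\<^sup>2 \<partial>lebesgue)"
        by (rule integral_mono[OF Gi]) (use Bi ptw in auto)
      then show "(\<integral>x. (cmod (gauss_poly \<kappa> m (\<delta> N) x))\<^sup>2 \<partial>lebesgue) \<le> (S N)\<^sup>2 * K"
        by (simp add: K_def)
    qed
    show "(\<lambda>N. 0) \<longlonglongrightarrow> (0::real)" by simp
    have "(\<lambda>N. (S N)\<^sup>2 * K) \<longlonglongrightarrow> 0\<^sup>2 * K" by (intro tendsto_intros S)
    then show "(\<lambda>N. (S N)\<^sup>2 * K) \<longlonglongrightarrow> 0" by simp
  qed
qed

section \<open>The derivatives of \<open>log ((1 + a) / (1 - a))\<close> and \<open>\<Lambda>\<^sub>m\<close>\<close>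

definition log_ratio_coeff :: "nat \<Rightarrow> real" where
  "log_ratio_coeff k = (if odd k then 2 / real k else 0)"

definition log_ratio_deriv :: "nat \<Rightarrow> real \<Rightarrow> real" where
  "log_ratio_deriv j a = (\<Sum>n. (diffs ^^ j) log_ratio_coeff n * a ^ n)"

lemma summable_log_ratio_coeff: "\<bar>a\<bar> < 1 \<Longrightarrow> summable (\<lambda>n. log_ratio_coeff n * a ^ n)"
proof -
  assume a: "\<bar>a\<bar> < 1"
  have "summable (\<lambda>n. 2 * \<bar>a\<bar> ^ n)" using a by (intro summable_mult summable_geometric) auto
  moreover have "norm (log_ratio_coeff n * a ^ n) \<le> 2 * \<bar>a\<bar> ^ n" for n
  proof -
    have "\<bar>log_ratio_coeff n\<bar> \<le> 2" by (auto simp: log_ratio_coeff_def divide_le_eq)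
    then show ?thesis by (simp add: abs_mult power_abs mult_right_mono)
  qed
  ultimately show ?thesis by (rule summable_comparison_test'[where N=0])
qed

lemma summable_log_ratio_deriv: "\<bar>a\<bar> < 1 \<Longrightarrow> summable (\<lambda>n. (diffs ^^ j) log_ratio_coeff n * a ^ n)"
proof (induction j arbitrary: a)
  case 0
  then show ?case using summable_log_ratio_coeff by simp
next
  case (Suc j)
  show ?case unfolding funpow.simps o_apply
    by (rule termdiff_converges[where K=1]) (use Suc in auto)
qed

lemma log_ratio_deriv_has_derivative: "\<bar>a\<bar> < 1 \<Longrightarrow> (log_ratio_deriv j has_real_derivative log_ratio_deriv (Suc j) a) (at a)"
  unfolding log_ratio_deriv_def[abs_def] funpow.simps o_apply
  by (rule termdiffs_strong'[where K=1]) (auto intro: summable_log_ratio_deriv)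

lemma diffs_log_ratio_coeff: "diffs log_ratio_coeff n = (if even n then 2 else 0)"
proof (cases "even n")
  case True
  then have "odd (Suc n)" by simp
  then show ?thesis using True unfolding diffs_def log_ratio_coeff_def by (simp del: of_nat_Suc)
next
  case False
  then show ?thesis unfolding diffs_def log_ratio_coeff_def by simp
qed

lemma diffs_log_ratio_coeff_power: "diffs log_ratio_coeff n * a ^ n = (if even n then 2 * (a\<^sup>2) ^ (n div 2) else 0)"
proof (cases "even n")
  case True
  then obtain b where "n = 2 * b" by (elim evenE)
  then show ?thesis unfolding diffs_log_ratio_coeff by (simp add: power_mult)
next
  case False
  then show ?thesis unfolding diffs_log_ratio_coeff by simp
qed

lemma log_ratio_deriv_1: "\<bar>a\<bar> < 1 \<Longrightarrow> log_ratio_deriv 1 a = 2 / (1 - a\<^sup>2)"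
proof -
  assume a: "\<bar>a\<bar> < 1"
  have "norm (a\<^sup>2) < 1" using a by (simp add: abs_square_less_1)
  then have "(\<lambda>n. 2 * (a\<^sup>2) ^ n) sums (2 * (1 / (1 - a\<^sup>2)))"
    by (intro sums_mult geometric_sums)
  from sums_if[OF sums_zero this]
  have "(\<lambda>n. if even n then 2 * (a\<^sup>2) ^ (n div 2) else 0) sums (2 / (1 - a\<^sup>2))" by simp
  then have "(\<lambda>n. diffs log_ratio_coeff n * a ^ n) sums (2 / (1 - a\<^sup>2))" unfolding diffs_log_ratio_coeff_power .
  then show ?thesis unfolding log_ratio_deriv_def by (simp add: sums_iff)
qed

lemma log_ratio_deriv_0: "\<bar>a\<bar> < 1 \<Longrightarrow> log_ratio_deriv 0 a = ln ((1 + a) / (1 - a))"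
proof -
  assume a: "\<bar>a\<bar> < 1"
  have "\<exists>c. \<forall>x\<in>{-1<..<1}. log_ratio_deriv 0 x - 2 * artanh x = c"
  proof (rule has_field_derivative_zero_constant)
    fix x :: real assume x: "x \<in> {-1<..<1}"
    then have x1: "\<bar>x\<bar> < 1" by auto
    have d1: "(log_ratio_deriv 0 has_real_derivative log_ratio_deriv 1 x) (at x)" using log_ratio_deriv_has_derivative[OF x1, of 0] by simp
    have d2: "(artanh has_real_derivative (1 / (1 - x\<^sup>2))) (at x)"
      using x by (intro artanh_real_has_field_derivative) auto
    have "((\<lambda>x. log_ratio_deriv 0 x - 2 * artanh x) has_real_derivative (log_ratio_deriv 1 x - 2 * (1 / (1 - x\<^sup>2)))) (at x)"
      by (rule DERIV_diff[OF d1 DERIV_cmult[OF d2]])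
    also have "log_ratio_deriv 1 x - 2 * (1 / (1 - x\<^sup>2)) = 0" using log_ratio_deriv_1[OF x1] by simp
    finally show "((\<lambda>x. log_ratio_deriv 0 x - 2 * artanh x) has_real_derivative 0) (at x within {-1<..<1})"
      by (rule has_field_derivative_at_within)
  qed auto
  then obtain c where c: "\<And>x. x \<in> {-1<..<1} \<Longrightarrow> log_ratio_deriv 0 x - 2 * artanh x = c" by blast
  have "log_ratio_deriv 0 0 = 0" by (simp add: log_ratio_deriv_def log_ratio_coeff_def)
  then have "c = 0" using c[of 0] by simp
  then show ?thesis using c[of a] a by (auto simp: artanh_def abs_less_iff)
qed

lemma funpow_diffs: "(diffs ^^ j) c k = (fact (k + j) / fact k) * (c (k + j) :: real)"
proof (induction j arbitrary: c k)
  case 0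
  then show ?case by simp
next
  case (Suc j)
  have "(diffs ^^ Suc j) c k = (diffs ^^ j) (diffs c) k" by (simp add: funpow_Suc_right del: funpow.simps)
  also have "\<dots> = fact (k + j) / fact k * diffs c (k + j)" by (rule Suc.IH)
  also have "\<dots> = fact (k + Suc j) / fact k * c (k + Suc j)"
    by (simp add: diffs_def algebra_simps add_divide_distrib)
  finally show ?case .
qed

lemma sums_odd_terms:
  fixes E :: "nat \<Rightarrow> real"
  assumes E: "E sums S" and ev: "\<And>n. E (2 * n) = 0"
  shows "(\<lambda>n. E (2 * n + 1)) sums S"
proof -
  have ps: "(\<Sum>n<N. E (2 * n + 1)) = (\<Sum>K<2 * N. E K)" for N
    by (induction N) (simp_all add: ev)
  have "(\<lambda>M. \<Sum>K<M. E K) \<longlonglongrightarrow> S" using E by (simp add: sums_def)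
  then have "((\<lambda>M. \<Sum>K<M. E K) \<circ> (\<lambda>N. 2 * N)) \<longlonglongrightarrow> S"
    by (rule LIMSEQ_subseq_LIMSEQ) (simp add: strict_mono_def)
  then show ?thesis unfolding sums_def ps[abs_def] by (simp add: o_def)
qed

lemma log_ratio_deriv_sums:
  assumes a: "\<bar>a\<bar> < 1"
  shows "(\<lambda>n. fact j * real (2 * n + 1 choose j) * a ^ (2 * n + 1 - j) / real (2 * n + 1)) sums (log_ratio_deriv j a / 2)"
proof -
  define E where "E K = fact j * real (K choose j) * log_ratio_coeff K * a ^ (K - j) / 2" for K
  have "(\<lambda>n. (diffs ^^ j) log_ratio_coeff n * a ^ n) sums log_ratio_deriv j a"
    unfolding log_ratio_deriv_def using summable_log_ratio_deriv[OF a] by (rule summable_sums)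
  then have "(\<lambda>n. (diffs ^^ j) log_ratio_coeff n * a ^ n / 2) sums (log_ratio_deriv j a / 2)" by (rule sums_divide)
  moreover have "(diffs ^^ j) log_ratio_coeff n * a ^ n / 2 = E (n + j)" for n
  proof -
    have "fact (n + j) / fact n = (fact j * real (n + j choose j) :: real)"
      by (simp add: binomial_fact field_simps)
    then show ?thesis unfolding funpow_diffs E_def by (simp add: add.commute)
  qed
  ultimately have "(\<lambda>n. E (n + j)) sums (log_ratio_deriv j a / 2)" by simp
  then have "E sums (log_ratio_deriv j a / 2)" by (subst (asm) sums_zero_iff_shift) (auto simp: E_def binomial_eq_0)
  from sums_odd_terms[OF this]
  have "(\<lambda>n. E (2 * n + 1)) sums (log_ratio_deriv j a / 2)" by (simp add: E_def log_ratio_coeff_def)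
  moreover have "E (2 * n + 1) = fact j * real (2 * n + 1 choose j) * a ^ (2 * n + 1 - j) / real (2 * n + 1)" for n
  proof -
    have "real (2 * n + 1) \<noteq> 0" by simp
    then show ?thesis unfolding E_def log_ratio_coeff_def by (simp add: field_simps del: of_nat_add of_nat_mult of_nat_Suc)
  qed
  ultimately show ?thesis by simp
qed

lemma binomial_sum_Suc:
  fixes s y :: real and d :: "nat \<Rightarrow> real"
  shows "y * (\<Sum>j\<le>m. real (m choose j) * s ^ j * y ^ (m - j) * d j)
       + s * (\<Sum>j\<le>m. real (m choose j) * s ^ j * y ^ (m - j) * d (Suc j))
       = (\<Sum>j\<le>Suc m. real (Suc m choose j) * s ^ j * y ^ (Suc m - j) * d j)"
proof -
  have A1: "y * (\<Sum>j\<le>m. real (m choose j) * s ^ j * y ^ (m - j) * d j)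
        = (\<Sum>j\<le>m. real (m choose j) * s ^ j * y ^ (Suc m - j) * d j)"
    unfolding sum_distrib_left by (rule sum.cong) (simp_all add: Suc_diff_le mult_ac)
  have A: "y * (\<Sum>j\<le>m. real (m choose j) * s ^ j * y ^ (m - j) * d j)
        = (\<Sum>j\<le>Suc m. real (m choose j) * s ^ j * y ^ (Suc m - j) * d j)"
    unfolding A1 by simp
  also have "\<dots> = y ^ Suc m * d 0 + (\<Sum>j\<le>m. real (m choose Suc j) * s ^ Suc j * y ^ (m - j) * d (Suc j))"
    unfolding sum.atMost_Suc_shift by simp
  finally have A': "y * (\<Sum>j\<le>m. real (m choose j) * s ^ j * y ^ (m - j) * d j)
      = y ^ Suc m * d 0 + (\<Sum>j\<le>m. real (m choose Suc j) * s ^ Suc j * y ^ (m - j) * d (Suc j))" .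
  have B: "s * (\<Sum>j\<le>m. real (m choose j) * s ^ j * y ^ (m - j) * d (Suc j))
        = (\<Sum>j\<le>m. real (m choose j) * s ^ Suc j * y ^ (m - j) * d (Suc j))"
    by (simp add: sum_distrib_left algebra_simps)
  have C: "(\<Sum>j\<le>Suc m. real (Suc m choose j) * s ^ j * y ^ (Suc m - j) * d j)
        = y ^ Suc m * d 0 + (\<Sum>j\<le>m. (real (m choose j) + real (m choose Suc j)) * s ^ Suc j * y ^ (m - j) * d (Suc j))"
    unfolding sum.atMost_Suc_shift by simp
  show ?thesis unfolding A' B C by (simp add: sum.distrib algebra_simps)
qed

definition Lambda_sum :: "real \<Rightarrow> nat \<Rightarrow> real \<Rightarrow> real \<Rightarrow> real" where
  "Lambda_sum \<epsilon> m x a = (\<Sum>j\<le>m. real (m choose j) * (- 2 * sqrt \<epsilon>) ^ j * (x\<^sup>2) ^ (m - j) * log_ratio_deriv j a)"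

lemma Lambda_sum_has_derivative:
  assumes "\<bar>a\<bar> < 1"
  shows "(Lambda_sum \<epsilon> m x has_real_derivative
          (\<Sum>j\<le>m. real (m choose j) * (- 2 * sqrt \<epsilon>) ^ j * (x\<^sup>2) ^ (m - j) * log_ratio_deriv (Suc j) a)) (at a)"
  unfolding Lambda_sum_def[abs_def]
  by (intro DERIV_sum DERIV_cmult log_ratio_deriv_has_derivative assms)

lemma Lambda_eq_Lambda_sum: "\<bar>a\<bar> < 1 \<Longrightarrow> Lambda \<epsilon> m x a = Lambda_sum \<epsilon> m x a"
proof (induction m arbitrary: a)
  case 0
  then show ?case by (simp add: Lambda_sum_def log_ratio_deriv_0)
next
  case (Suc m)
  have "(Lambda \<epsilon> m x has_real_derivative
          (\<Sum>j\<le>m. real (m choose j) * (- 2 * sqrt \<epsilon>) ^ j * (x\<^sup>2) ^ (m - j) * log_ratio_deriv (Suc j) a)) (at a)"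
  proof (rule has_field_derivative_transform_within_open[OF Lambda_sum_has_derivative[OF Suc.prems], where S="{-1<..<1}"])
    show "open {-1<..<1::real}" by simp
    show "a \<in> {-1<..<1}" using Suc.prems by auto
    fix b :: real assume "b \<in> {-1<..<1}"
    then show "Lambda_sum \<epsilon> m x b = Lambda \<epsilon> m x b" using Suc.IH[of b] by auto
  qed
  then have dv: "deriv (Lambda \<epsilon> m x) a = (\<Sum>j\<le>m. real (m choose j) * (- 2 * sqrt \<epsilon>) ^ j * (x\<^sup>2) ^ (m - j) * log_ratio_deriv (Suc j) a)"
    by (rule DERIV_imp_deriv)
  have "Lambda \<epsilon> (Suc m) x a = x\<^sup>2 * Lambda_sum \<epsilon> m x a + (- 2 * sqrt \<epsilon>) * deriv (Lambda \<epsilon> m x) a"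
    using Suc.IH[OF Suc.prems] by simp
  also have "\<dots> = Lambda_sum \<epsilon> (Suc m) x a"
    unfolding dv Lambda_sum_def by (rule binomial_sum_Suc)
  finally show ?case .
qed

section \<open>The series defining \<open>S\<^sub>\<epsilon> f\<^sub>2\<^sub>m\<close>\<close>

lemma fact_mult_choose_Suc:
  assumes "Suc j \<le> m"
  shows "fact (Suc j) * real (m choose Suc j) = real (m - j) * (fact j * real (m choose j))"
proof -
  have "m - j = Suc (m - Suc j)" using assms by simp
  then show ?thesis using assms by (simp add: binomial_fact field_simps del: of_nat_Suc)
qed

text \<open>The coefficients of \<open>t\<^sup>k f\<^sub>2\<^sub>m\<close>, found by solving the recursion given by \<open>t_coeffs\<close>.\<close>

definition t_pow_coeffs :: "real \<Rightarrow> real \<Rightarrow> nat \<Rightarrow> nat \<Rightarrow> nat \<Rightarrow> complex" where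
  "t_pow_coeffs \<epsilon> \<alpha> m k j = (\<i> / of_real (sqrt \<epsilon>)) ^ k * of_real (fact j * real (m choose j)) *
      of_nat (k choose j) * of_real \<alpha> ^ (k - j) * of_real (- 2 * sqrt \<epsilon>) ^ j"

lemma t_coeffs_t_pow_coeffs:
  assumes e: "0 < \<epsilon>" and j: "j \<le> m"
  shows "t_coeffs (\<alpha> / sqrt \<epsilon>) m (t_pow_coeffs \<epsilon> \<alpha> m k) j = t_pow_coeffs \<epsilon> \<alpha> m (Suc k) j"
proof -
  define r where "r = \<i> / complex_of_real (sqrt \<epsilon>)"
  define s where "s = complex_of_real (- 2 * sqrt \<epsilon>)"
  define A where "A = complex_of_real \<alpha>"
  have se: "sqrt \<epsilon> \<noteq> 0" using e by simp
  have rA: "\<i> * of_real (\<alpha> / sqrt \<epsilon>) = r * A" unfolding r_def A_def by simp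
  have rs: "r * s = - 2 * \<i>" unfolding r_def s_def using se by (simp add: field_simps)
  show ?thesis
  proof (cases j)
    case 0
    then show ?thesis unfolding t_coeffs_def t_pow_coeffs_def rA r_def[symmetric] A_def[symmetric]
      by simp
  next
    case (Suc i)
    have i: "Suc i \<le> m" using j Suc by simp
    have ff: "complex_of_real (fact (Suc i) * real (m choose Suc i)) = of_nat (m - i) * of_real (fact i * real (m choose i))"
      using fact_mult_choose_Suc[OF i] by (metis of_real_mult of_real_of_nat_eq)
    have mi: "m - Suc i + 1 = m - i" using i by simp
    have t1: "of_nat (k choose Suc i) * A ^ (k - i) = A * (of_nat (k choose Suc i) * A ^ (k - Suc i))"
    proof (cases "Suc i \<le> k")
      case True
      then have "k - i = Suc (k - Suc i)" by simp
      then show ?thesis by simp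
    next
      case False
      then show ?thesis by (simp add: binomial_eq_0)
    qed
    have "t_pow_coeffs \<epsilon> \<alpha> m (Suc k) j = r ^ Suc k * of_real (fact (Suc i) * real (m choose Suc i)) *
        (of_nat (k choose Suc i) + of_nat (k choose i)) * A ^ (k - i) * s ^ Suc i"
      unfolding t_pow_coeffs_def Suc r_def[symmetric] s_def[symmetric] A_def[symmetric] by simp
    also have "\<dots> = r * A * (r ^ k * of_real (fact (Suc i) * real (m choose Suc i)) * of_nat (k choose Suc i) * A ^ (k - Suc i) * s ^ Suc i)
        + (r * s) * of_nat (m - i) * (r ^ k * of_real (fact i * real (m choose i)) * of_nat (k choose i) * A ^ (k - i) * s ^ i)"
      unfolding ff using t1 by (simp add: algebra_simps)
    also have "\<dots> = t_coeffs (\<alpha> / sqrt \<epsilon>) m (t_pow_coeffs \<epsilon> \<alpha> m k) j"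
      unfolding t_coeffs_def t_pow_coeffs_def Suc rA rs r_def[symmetric] s_def[symmetric] A_def[symmetric] mi
      by (simp add: algebra_simps)
    finally show ?thesis by simp
  qed
qed

lemma t_pow_gauss_poly:
  assumes e: "0 < \<epsilon>" and a: "0 < \<alpha>"
  shows "t_pow k (gauss_poly (\<alpha> / sqrt \<epsilon>) m (t_pow_coeffs \<epsilon> \<alpha> m l)) (gauss_poly (\<alpha> / sqrt \<epsilon>) m (t_pow_coeffs \<epsilon> \<alpha> m (l + k)))"
proof (induction k arbitrary: l)
  case 0
  show ?case using L2_gauss_poly[of "\<alpha> / sqrt \<epsilon>"] e a by simp
next
  case (Suc k)
  have k: "0 < \<alpha> / sqrt \<epsilon>" using e a by simp
  have "gauss_poly (\<alpha> / sqrt \<epsilon>) m (t_coeffs (\<alpha> / sqrt \<epsilon>) m (t_pow_coeffs \<epsilon> \<alpha> m l)) = gauss_poly (\<alpha> / sqrt \<epsilon>) m (t_pow_coeffs \<epsilon> \<alpha> m (Suc l))"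
    by (rule gauss_poly_cong) (rule t_coeffs_t_pow_coeffs[OF e])
  then have "t_rel (gauss_poly (\<alpha> / sqrt \<epsilon>) m (t_pow_coeffs \<epsilon> \<alpha> m l)) (gauss_poly (\<alpha> / sqrt \<epsilon>) m (t_pow_coeffs \<epsilon> \<alpha> m (Suc l)))"
    using t_rel_gauss_poly[OF k, of m "t_pow_coeffs \<epsilon> \<alpha> m l"] by simp
  moreover have "t_pow k (gauss_poly (\<alpha> / sqrt \<epsilon>) m (t_pow_coeffs \<epsilon> \<alpha> m (Suc l))) (gauss_poly (\<alpha> / sqrt \<epsilon>) m (t_pow_coeffs \<epsilon> \<alpha> m (l + Suc k)))"
    using Suc.IH[of "Suc l"] by simp
  ultimately show ?case by auto
qed

lemma t_pow_coeffs_0: "t_pow_coeffs \<epsilon> \<alpha> m 0 j = (if j = 0 then 1 else 0)"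
  by (cases j) (simp_all add: t_pow_coeffs_def)

lemma S_weight_t_pow_coeffs:
  assumes e: "0 < \<epsilon>"
  shows "of_real (S_weight \<epsilon> n) * t_pow_coeffs \<epsilon> \<alpha> m (2 * n + 1) j
    = \<i> * of_real (real (m choose j) * (- 2 * sqrt \<epsilon>) ^ j) *
      of_real (fact j * real (2 * n + 1 choose j) * \<alpha> ^ (2 * n + 1 - j) / real (2 * n + 1))"
proof -
  have se: "complex_of_real (sqrt \<epsilon>) \<noteq> 0" using e by simp
  have p: "(\<i> / complex_of_real (sqrt \<epsilon>)) ^ (2 * n + 1) * complex_of_real (sqrt \<epsilon>) ^ (2 * n + 1) = \<i> * (-1) ^ n"
  proof -
    have "(\<i> / complex_of_real (sqrt \<epsilon>)) ^ (2 * n + 1) * complex_of_real (sqrt \<epsilon>) ^ (2 * n + 1)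
        = (\<i> / complex_of_real (sqrt \<epsilon>) * complex_of_real (sqrt \<epsilon>)) ^ (2 * n + 1)"
      by (simp only: power_mult_distrib)
    also have "\<dots> = \<i> ^ (2 * n + 1)" using se by simp
    also have "\<dots> = \<i> * (-1) ^ n" by (simp add: power_mult)
    finally show ?thesis .
  qed
  define Q where "Q = of_real (fact j * real (m choose j)) * of_nat (2 * n + 1 choose j) *
      complex_of_real \<alpha> ^ (2 * n + 1 - j) * complex_of_real (- 2 * sqrt \<epsilon>) ^ j"
  define R where "R = (\<i> / complex_of_real (sqrt \<epsilon>)) ^ (2 * n + 1)"
  define V where "V = complex_of_real (sqrt \<epsilon>) ^ (2 * n + 1)"
  define W where "W = complex_of_real ((-1) ^ n / real (2 * n + 1))"
  have "of_real (S_weight \<epsilon> n) * t_pow_coeffs \<epsilon> \<alpha> m (2 * n + 1) j = W * (R * V) * Q"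
    unfolding S_weight_def t_pow_coeffs_def Q_def R_def V_def W_def by (simp only: of_real_mult of_real_power mult_ac)
  also have "R * V = \<i> * (-1) ^ n" using p unfolding R_def V_def .
  also have "W * (\<i> * (-1) ^ n) = \<i> / of_nat (2 * n + 1)"
    unfolding W_def by (simp add: field_simps)
  finally show ?thesis unfolding Q_def by (simp add: field_simps)
qed

definition S_coeffs :: "real \<Rightarrow> real \<Rightarrow> nat \<Rightarrow> nat \<Rightarrow> complex" where
  "S_coeffs \<epsilon> \<alpha> m j = - \<i> / (2 * sqrt \<epsilon>) * of_real (real (m choose j) * (- 2 * sqrt \<epsilon>) ^ j * log_ratio_deriv j \<alpha>)"

lemma gaussian_eq: "0 < \<epsilon> \<Longrightarrow> gaussian (\<alpha> / sqrt \<epsilon>) x = exp (- \<alpha> * x\<^sup>2 / (2 * sqrt \<epsilon>))"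
  unfolding gaussian_def by (simp add: field_simps)

lemma gauss_poly_S_coeffs:
  assumes e: "0 < \<epsilon>" and a: "\<bar>\<alpha>\<bar> < 1"
  shows "gauss_poly (\<alpha> / sqrt \<epsilon>) m (S_coeffs \<epsilon> \<alpha> m) x
       = - \<i> / (2 * sqrt \<epsilon>) * of_real (Lambda \<epsilon> m x \<alpha> * exp (- \<alpha> * x\<^sup>2 / (2 * sqrt \<epsilon>)))"
proof -
  have "Lambda \<epsilon> m x \<alpha> = Lambda_sum \<epsilon> m x \<alpha>" by (rule Lambda_eq_Lambda_sum[OF a])
  then show ?thesis unfolding gauss_poly_def S_coeffs_def Lambda_sum_def gaussian_eq[OF e]
    by (simp add: sum_distrib_left sum_distrib_right mult_ac)
qed

lemma gauss_poly_t_pow_coeffs_0: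
  assumes e: "0 < \<epsilon>"
  shows "complex_of_real (x ^ (2 * m) * exp (- \<alpha> * x\<^sup>2 / (2 * sqrt \<epsilon>))) = gauss_poly (\<alpha> / sqrt \<epsilon>) m (t_pow_coeffs \<epsilon> \<alpha> m 0) x"
proof -
  have "(\<Sum>j\<le>m. t_pow_coeffs \<epsilon> \<alpha> m 0 j * complex_of_real ((x\<^sup>2) ^ (m - j))) = complex_of_real ((x\<^sup>2) ^ m)"
  proof -
    have "(\<Sum>j\<le>m. t_pow_coeffs \<epsilon> \<alpha> m 0 j * complex_of_real ((x\<^sup>2) ^ (m - j)))
        = (\<Sum>j\<le>m. if j = 0 then complex_of_real ((x\<^sup>2) ^ (m - j)) else 0)"
      unfolding t_pow_coeffs_0 by (rule sum.cong) auto
    also have "\<dots> = complex_of_real ((x\<^sup>2) ^ m)" by (subst sum.delta) auto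
    finally show ?thesis .
  qed
  then show ?thesis unfolding gauss_poly_def gaussian_eq[OF e] by (simp add: power_mult)
qed

lemma S_partial_sums_tendsto:
  assumes \<epsilon>: "0 < \<epsilon>" and \<alpha>0: "0 < \<alpha>" and \<alpha>1: "\<alpha> < 1"
  shows "(\<lambda>N. \<integral>x. (cmod ((\<Sum>n\<le>N. of_real (S_weight \<epsilon> n) * gauss_poly (\<alpha> / sqrt \<epsilon>) m (t_pow_coeffs \<epsilon> \<alpha> m (2 * n + 1)) x)
            - of_real (- sqrt \<epsilon>) * gauss_poly (\<alpha> / sqrt \<epsilon>) m (S_coeffs \<epsilon> \<alpha> m) x))\<^sup>2 \<partial>lebesgue) \<longlonglongrightarrow> 0"
proof -
  define \<delta> where "\<delta> N j = (\<Sum>n\<le>N. of_real (S_weight \<epsilon> n) * t_pow_coeffs \<epsilon> \<alpha> m (2 * n + 1) j) - of_real (- sqrt \<epsilon>) * S_coeffs \<epsilon> \<alpha> m j"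
    for N j
  have eq: "(\<Sum>n\<le>N. of_real (S_weight \<epsilon> n) * gauss_poly (\<alpha> / sqrt \<epsilon>) m (t_pow_coeffs \<epsilon> \<alpha> m (2 * n + 1)) x)
            - of_real (- sqrt \<epsilon>) * gauss_poly (\<alpha> / sqrt \<epsilon>) m (S_coeffs \<epsilon> \<alpha> m) x = gauss_poly (\<alpha> / sqrt \<epsilon>) m (\<delta> N) x" for N x
    unfolding \<delta>_def gauss_poly_diff gauss_poly_sum gauss_poly_scale ..
  have lim: "(\<lambda>N. \<delta> N j) \<longlonglongrightarrow> 0" if "j \<le> m" for j
  proof -
    define b where "b n = fact j * real (2 * n + 1 choose j) * \<alpha> ^ (2 * n + 1 - j) / real (2 * n + 1)" for n
    define c where "c = \<i> * complex_of_real (real (m choose j) * (- 2 * sqrt \<epsilon>) ^ j)"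
    have "\<bar>\<alpha>\<bar> < 1" using \<alpha>0 \<alpha>1 by simp
    from log_ratio_deriv_sums[OF this, of j] have "(\<lambda>N. \<Sum>n\<le>N. b n) \<longlonglongrightarrow> log_ratio_deriv j \<alpha> / 2"
      unfolding sums_def_le b_def .
    then have l1: "(\<lambda>N. c * of_real (\<Sum>n\<le>N. b n)) \<longlonglongrightarrow> c * of_real (log_ratio_deriv j \<alpha> / 2)"
      by (intro tendsto_intros)
    have e2: "(\<lambda>N. \<Sum>n\<le>N. of_real (S_weight \<epsilon> n) * t_pow_coeffs \<epsilon> \<alpha> m (2 * n + 1) j) = (\<lambda>N. c * of_real (\<Sum>n\<le>N. b n))"
      unfolding S_weight_t_pow_coeffs[OF \<epsilon>] c_def b_def by (simp add: sum_distrib_left mult.assoc)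
    have e3: "of_real (- sqrt \<epsilon>) * S_coeffs \<epsilon> \<alpha> m j = c * of_real (log_ratio_deriv j \<alpha> / 2)"
      using \<epsilon> unfolding S_coeffs_def c_def by (simp add: field_simps)
    have "(\<lambda>N. (\<Sum>n\<le>N. of_real (S_weight \<epsilon> n) * t_pow_coeffs \<epsilon> \<alpha> m (2 * n + 1) j) - of_real (- sqrt \<epsilon>) * S_coeffs \<epsilon> \<alpha> m j)
        \<longlonglongrightarrow> c * of_real (log_ratio_deriv j \<alpha> / 2) - c * of_real (log_ratio_deriv j \<alpha> / 2)"
      unfolding e3 using tendsto_diff[OF l1[folded e2] tendsto_const[of "c * of_real (log_ratio_deriv j \<alpha> / 2)"]] .
    then show ?thesis unfolding \<delta>_def by simp
  qed
  have k: "0 < \<alpha> / sqrt \<epsilon>" using \<epsilon> \<alpha>0 by simp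
  show ?thesis unfolding eq by (rule gauss_poly_L2_tendsto_0[OF k lim])
qed

lemma S_rel_gauss_poly:
  assumes "0 < \<epsilon>" "0 < \<alpha>" "\<alpha> < 1"
  shows "S_rel \<epsilon> (gauss_poly (\<alpha> / sqrt \<epsilon>) m (t_pow_coeffs \<epsilon> \<alpha> m 0))
                 (gauss_poly (\<alpha> / sqrt \<epsilon>) m (S_coeffs \<epsilon> \<alpha> m))"
  unfolding S_rel_iff L2_even_def
proof (intro conjI exI[of _ "\<lambda>n. gauss_poly (\<alpha> / sqrt \<epsilon>) m (t_pow_coeffs \<epsilon> \<alpha> m (2 * n + 1))"] allI)
  have "0 < \<alpha> / sqrt \<epsilon>" using assms by simp
  then show "L2 (gauss_poly (\<alpha> / sqrt \<epsilon>) m (t_pow_coeffs \<epsilon> \<alpha> m 0))"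
    "L2 (gauss_poly (\<alpha> / sqrt \<epsilon>) m (S_coeffs \<epsilon> \<alpha> m))"
    by (auto intro: L2_gauss_poly)
  show "AE x in lebesgue. gauss_poly (\<alpha> / sqrt \<epsilon>) m (t_pow_coeffs \<epsilon> \<alpha> m 0) (- x)
      = gauss_poly (\<alpha> / sqrt \<epsilon>) m (t_pow_coeffs \<epsilon> \<alpha> m 0) x"
    by (simp add: gauss_poly_even)
  show "t_pow (2 * n + 1) (gauss_poly (\<alpha> / sqrt \<epsilon>) m (t_pow_coeffs \<epsilon> \<alpha> m 0))
      (gauss_poly (\<alpha> / sqrt \<epsilon>) m (t_pow_coeffs \<epsilon> \<alpha> m (2 * n + 1)))" for n
    using t_pow_gauss_poly[OF assms(1,2), of "2 * n + 1" m 0] by simp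
qed (rule S_partial_sums_tendsto[OF assms])

theorem lemma3p6:
  fixes \<epsilon> \<alpha> :: real
  assumes "0 < \<epsilon>" "\<epsilon> \<le> 1" "0 < \<alpha>" "\<alpha> < 1"
  defines "\<xi> \<equiv> (\<lambda>x::real. exp (- \<alpha> * x\<^sup>2 / (2 * sqrt \<epsilon>)))"
  defines "f \<equiv> (\<lambda>(m::nat) (x::real). complex_of_real (x ^ (2 * m) * \<xi> x))"
  shows "(\<forall>m. S_rel \<epsilon> (f m) (\<lambda>x. - \<i> / (2 * sqrt \<epsilon>) * of_real (Lambda \<epsilon> m x \<alpha> * \<xi> x))) \<and>
         (\<forall>n m h. S_rel \<epsilon> (f m) h \<longrightarrow>
           integral\<^sup>L lebesgue (\<lambda>x. cnj (f n x) * h x)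
             = - \<i> / (2 * sqrt \<epsilon>) *
               of_real (integral\<^sup>L lebesgue (\<lambda>x. \<xi> x * x ^ (2 * n) * Lambda \<epsilon> m x \<alpha> * \<xi> x)))"
proof -
  define S where "S m x = - \<i> / (2 * sqrt \<epsilon>) * of_real (Lambda \<epsilon> m x \<alpha> * \<xi> x)" for m x
  have f_eq: "f m = gauss_poly (\<alpha> / sqrt \<epsilon>) m (t_pow_coeffs \<epsilon> \<alpha> m 0)" for m
    unfolding f_def \<xi>_def using gauss_poly_t_pow_coeffs_0[OF assms(1)] by (intro ext) simp
  have S_eq: "S m = gauss_poly (\<alpha> / sqrt \<epsilon>) m (S_coeffs \<epsilon> \<alpha> m)" for m
    unfolding S_def \<xi>_def using gauss_poly_S_coeffs[OF assms(1)] assms(3,4) by (intro ext) simp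
  have S_rel: "S_rel \<epsilon> (f m) (S m)" for m
    unfolding f_eq S_eq using S_rel_gauss_poly assms by simp
  have "(\<integral>x. cnj (f n x) * h x \<partial>lebesgue)
      = - \<i> / (2 * sqrt \<epsilon>) * of_real (\<integral>x. \<xi> x * x ^ (2 * n) * Lambda \<epsilon> m x \<alpha> * \<xi> x \<partial>lebesgue)"
    if h: "S_rel \<epsilon> (f m) h" for n m h
  proof -
    have [measurable]: "h \<in> borel_measurable lebesgue" using h by (simp add: S_rel_def L2_def)
    have [measurable]: "f n \<in> borel_measurable lebesgue" "S m \<in> borel_measurable lebesgue"
      unfolding f_eq S_eq by (rule gauss_poly_measurable)+
    have "AE x in lebesgue. h x = S m x" by (rule S_rel_unique[OF assms(1) h S_rel])
    then have "(\<integral>x. f n x * h x \<partial>lebesgue) = (\<integral>x. f n x * S m x \<partial>lebesgue)"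
      by (intro integral_cong_AE) (auto elim: eventually_mono)
    then have "(\<integral>x. cnj (f n x) * h x \<partial>lebesgue) = (\<integral>x. f n x * S m x \<partial>lebesgue)"
      by (simp add: f_def)
    also have "\<dots> = (\<integral>x. - \<i> / (2 * sqrt \<epsilon>) * of_real (\<xi> x * x ^ (2 * n) * Lambda \<epsilon> m x \<alpha> * \<xi> x) \<partial>lebesgue)"
      by (simp add: f_def S_def mult_ac)
    finally show ?thesis by (simp only: integral_mult_right_zero integral_complex_of_real)
  qed
  with S_rel show ?thesis unfolding S_def[symmetric] by blast
qed

end
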